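(* Let $\vartheta$ be a compatible, recognisable random substitution on an alphabet $\mathcal A$ with $d$ letters. Then $A_n\subseteq A_{n+1}$ for all $n\ge1$, and $A=\bigcup_{n\ge1}A_n$ is a normal subgroup of the shuffle group $\Gamma$ of index at most $2^d$.
   Context: A random substitution on a finite alphabet $\mathcal A$ is a map $\vartheta$ from $\mathcal A$ to non-empty finite sets of non-empty words, extended to words by concatenating choices and iterated; elements of $\vartheta^n(a)$ are level-$n$ inflation words of type $a$. $X_\vartheta\subseteq\mathcal A^{\mathbb Z}$ is the set of sequences all of whose subwords are legal (subwords of words in some $\vartheta^p(a)$), with shift $\sigma$. $\vartheta$ is compatible if for each $a$ all words in $\vartheta(a)$ have the same letter counts; a compatible $\vartheta$ is recognisable if each $x\in X_\vartheta$ has a unique $y\in X_\vartheta$ and unique $0\le k\le|\vartheta(y_0)|-1$ with $\sigma^{-k}(x)\in\vartheta(y)$ (where $\vartheta(y)$ is the set of sequences $\cdots w_{-1}w_0w_1\cdots$, $w_i\in\vartheta(y_i)$, $w_0$ starting at index 0). Then every $\vartheta^n$ is recognisable, so each $x$ is uniquely a bi-infinite concatenation of level-$n$ inflation words with uniquely determined positions and types. For a permutation $\alpha$ of $\vartheta^n(a)$, $f_\alpha\in\operatorname{Aut}(X_\vartheta)$ replaces each level-$n$ inflation word $u_i$ of type $a$ in this decomposition by $\alpha(u_i)$. $\Gamma_{n,a}=\{f_\alpha:\alpha\in\operatorname{Sym}(\vartheta^n(a))\}$, $\Gamma_n=\prod_a\Gamma_{n,a}$ (an increasing chain in $n$), $\Gamma=\bigcup_n\Gamma_n$.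 $A_{n,a}=\{f_\alpha:\alpha$ an even permutation of $\vartheta^n(a)\}$ and $A_n=\prod_a A_{n,a}$. *)

theory Defs
  imports "HOL-Algebra.Algebra" "HOL-Combinatorics.Permutations" "HOL-Library.Sublist"
begin

definition rand_subst :: "('a \<Rightarrow> 'a list set) \<Rightarrow> bool" where
  "rand_subst \<theta> \<longleftrightarrow> (\<forall>a. finite (\<theta> a) \<and> \<theta> a \<noteq> {} \<and> [] \<notin> \<theta> a)"

fun subst_word :: "('a \<Rightarrow> 'a list set) \<Rightarrow> 'a list \<Rightarrow> 'a list set" where
  "subst_word \<theta> [] = {[]}"
| "subst_word \<theta> (a # w) = {u @ v | u v. u \<in> \<theta> a \<and> v \<in> subst_word \<theta> w}"

fun subst_pow :: "('a \<Rightarrow> 'a list set) \<Rightarrow> nat \<Rightarrow> 'a \<Rightarrow> 'a list set" where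
  "subst_pow \<theta> 0 a = {[a]}"
| "subst_pow \<theta> (Suc n) a = (\<Union>u \<in> subst_pow \<theta> n a. subst_word \<theta> u)"

definition legal :: "('a \<Rightarrow> 'a list set) \<Rightarrow> 'a list \<Rightarrow> bool" where
  "legal \<theta> w \<longleftrightarrow> (\<exists>p a v. v \<in> subst_pow \<theta> p a \<and> sublist w v)"

definition Xsub :: "('a \<Rightarrow> 'a list set) \<Rightarrow> (int \<Rightarrow> 'a) set" where
  "Xsub \<theta> = {x. \<forall>i k. legal \<theta> (map (\<lambda>j. x (i + int j)) [0..<k])}"

definition compatible :: "('a \<Rightarrow> 'a list set) \<Rightarrow> bool" where
  "compatible \<theta> \<longleftrightarrow> (\<forall>a. \<forall>u\<in>\<theta> a. \<forall>v\<in>\<theta> a. \<forall>b. count (mset u) b = count (mset v) b)"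

(* |theta(a)|: the common length of the words in theta(a) (for compatible theta) *)
definition slen :: "('a \<Rightarrow> 'a list set) \<Rightarrow> 'a \<Rightarrow> nat" where
  "slen \<theta> a = length (SOME u. u \<in> \<theta> a)"

(* z \<in> theta(y): z = ... w_{-1} w_0 w_1 ... with w_i \<in> theta(y_i), w_0 starting at index 0;
   p i is the starting index of w_i *)
definition in_image :: "('a \<Rightarrow> 'a list set) \<Rightarrow> (int \<Rightarrow> 'a) \<Rightarrow> (int \<Rightarrow> 'a) \<Rightarrow> bool" where
  "in_image \<theta> y z \<longleftrightarrow> (\<exists>w p. (\<forall>i. w i \<in> \<theta> (y i)) \<and> p 0 = 0 \<and>
      (\<forall>i. p (i + 1) = p i + int (length (w i))) \<and>
      (\<forall>i j. j < length (w i) \<longrightarrow> z (p i + int j) = w i ! j))"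

(* sigma^{-k} x, where (sigma x)_i = x_{i+1} *)
definition shift_back :: "nat \<Rightarrow> (int \<Rightarrow> 'a) \<Rightarrow> (int \<Rightarrow> 'a)" where
  "shift_back k x = (\<lambda>i. x (i - int k))"

definition recognisable :: "('a \<Rightarrow> 'a list set) \<Rightarrow> bool" where
  "recognisable \<theta> \<longleftrightarrow> compatible \<theta> \<and>
     (\<forall>x \<in> Xsub \<theta>. \<exists>!(y, k). y \<in> Xsub \<theta> \<and> k < slen \<theta> (y 0) \<and> in_image \<theta> y (shift_back k x))"

(* f_alpha for a family alpha (alpha a a permutation of theta^n(a)): in the (unique) decomposition
   of x into level-n inflation words, replace each word u_i of type a by alpha a u_i.
   Defined as an element of the symmetric group of X_theta (extensional outside X_theta). *)
definition shuffle_map :: "('a \<Rightarrow> 'a list set) \<Rightarrow> nat \<Rightarrow> ('a \<Rightarrow> 'a list \<Rightarrow> 'a list)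
    \<Rightarrow> (int \<Rightarrow> 'a) \<Rightarrow> (int \<Rightarrow> 'a)" where
  "shuffle_map \<theta> n \<alpha> = restrict (\<lambda>x. THE x'. \<exists>y k w p.
       y \<in> Xsub \<theta> \<and> k < slen (subst_pow \<theta> n) (y 0) \<and>
       (\<forall>i. w i \<in> subst_pow \<theta> n (y i)) \<and> p 0 = 0 \<and>
       (\<forall>i. p (i + 1) = p i + int (length (w i))) \<and>
       (\<forall>i j. j < length (w i) \<longrightarrow> x (p i + int j - int k) = w i ! j) \<and>
       (\<forall>i j. j < length (w i) \<longrightarrow> x' (p i + int j - int k) = \<alpha> (y i) (w i) ! j))
     (Xsub \<theta>)"

definition Gamma_na :: "('a \<Rightarrow> 'a list set) \<Rightarrow> nat \<Rightarrow> 'a \<Rightarrow> ((int \<Rightarrow> 'a) \<Rightarrow> (int \<Rightarrow> 'a)) set" where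
  "Gamma_na \<theta> n a = {shuffle_map \<theta> n (\<lambda>b. if b = a then \<beta> else id) | \<beta>. \<beta> permutes subst_pow \<theta> n a}"

definition Gamma_n :: "('a \<Rightarrow> 'a list set) \<Rightarrow> nat \<Rightarrow> ((int \<Rightarrow> 'a) \<Rightarrow> (int \<Rightarrow> 'a)) set" where
  "Gamma_n \<theta> n = {shuffle_map \<theta> n \<alpha> | \<alpha>. \<forall>a. \<alpha> a permutes subst_pow \<theta> n a}"

definition A_n :: "('a \<Rightarrow> 'a list set) \<Rightarrow> nat \<Rightarrow> ((int \<Rightarrow> 'a) \<Rightarrow> (int \<Rightarrow> 'a)) set" where
  "A_n \<theta> n = {shuffle_map \<theta> n \<alpha> | \<alpha>. \<forall>a. \<alpha> a permutes subst_pow \<theta> n a \<and> evenperm (\<alpha> a)}"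

definition Gamma :: "('a \<Rightarrow> 'a list set) \<Rightarrow> ((int \<Rightarrow> 'a) \<Rightarrow> (int \<Rightarrow> 'a)) set" where
  "Gamma \<theta> = (\<Union>n. Gamma_n \<theta> n)"

definition A_all :: "('a \<Rightarrow> 'a list set) \<Rightarrow> ((int \<Rightarrow> 'a) \<Rightarrow> (int \<Rightarrow> 'a)) set" where
  "A_all \<theta> = (\<Union>n\<in>{1..}. A_n \<theta> n)"

definition Gamma_group :: "('a \<Rightarrow> 'a list set) \<Rightarrow> ((int \<Rightarrow> 'a) \<Rightarrow> (int \<Rightarrow> 'a)) monoid" where
  "Gamma_group \<theta> = (BijGroup (Xsub \<theta>)) \<lparr>carrier := Gamma \<theta>\<rparr>"

end

(* By recognisability, every sequence of the subshift decomposes, at every level n, into level-n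
   inflation words whose positions and types (again a sequence of the subshift) are unique up to a
   shift of indices: the level-1 case is recognisability itself, and a level-(n+1) decomposition
   refines into a level-1 decomposition of a level-n one. Consequently a level-(n+1) inflation word
   of a type occurring in the subshift factors uniquely into level-n inflation words, and the shuffle
   map of a family alpha at level n equals the one at level n+1 of the family that applies alpha to
   these factors. For fixed letters a and b this lifting is a homomorphism from the permutations of
   theta^n(a) to those of theta^(n+1)(b), and every such homomorphism maps even permutations to even
   ones, because the image of a 3-cycle has order dividing 3. This gives A_n <= A_(n+1) (and
   Gamma_n <= Gamma_(n+1)). Conjugation does not change the parity of the components of a family, so
   A is normal in Gamma; and any finitely many cosets of A have representatives at a common level N
   that are identities or fixed odd permutations letterwise, so there are at most 2^d of them. *)

theory Submission
  imports Defs
begin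

section \<open>Segments of sequences\<close>

definition segment :: "(int \<Rightarrow> 'a) \<Rightarrow> int \<Rightarrow> nat \<Rightarrow> 'a list" where
  "segment x i k = map (\<lambda>j. x (i + int j)) [0..<k]"

lemma length_segment [simp]: "length (segment x i k) = k"
  by (simp add: segment_def)

lemma nth_segment [simp]: "j < k \<Longrightarrow> segment x i k ! j = x (i + int j)"
  by (simp add: segment_def)

lemma segment_0 [simp]: "segment x i 0 = []"
  by (simp add: segment_def)

lemma segment_Suc_0 [simp]: "segment x i (Suc 0) = [x i]"
  by (simp add: segment_def)

lemma segment_add: "segment x i (k + l) = segment x i k @ segment x (i + int k) l"
  by (rule nth_equalityI) (auto simp: nth_append add.assoc)

lemma segment_shift: "segment (\<lambda>m. x (m + s)) i k = segment x (i + s) k"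
  by (rule nth_equalityI) (auto simp: algebra_simps)

lemma segment_eq_middle:
  assumes "segment x i N = A @ B @ C"
  shows "segment x (i + int (length A)) (length B) = B"
proof -
  have "N = length A + length B + length C"
    using arg_cong[OF assms, of length] by simp
  then have "segment x i N = segment x i (length A) @ segment x (i + int (length A)) (length B) @
      segment x (i + int (length A) + int (length B)) (length C)"
    by (simp add: segment_add add.assoc)
  with assms show ?thesis
    by (simp add: append_eq_append_conv)
qed

lemma segment_concat_nth:
  assumes "segment x i N = concat ws" "j < length ws"
  shows "segment x (i + int (length (concat (take j ws)))) (length (ws ! j)) = ws ! j"
proof -
  have "ws = take j ws @ ws ! j # drop (Suc j) ws"
    using assms(2) by (simp add: id_take_nth_drop)
  then have "segment x i N = concat (take j ws) @ ws ! j @ concat (drop (Suc j) ws)"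
    using assms(1) by (metis concat.simps(2) concat_append)
  then show ?thesis
    by (rule segment_eq_middle)
qed

lemma sublist_segment:
  assumes "i \<le> j" "j + int k \<le> i + int N"
  shows "sublist (segment x j k) (segment x i N)"
proof -
  define p where "p = nat (j - i)"
  have j: "j = i + int p" and N: "N = p + k + (N - p - k)"
    using assms unfolding p_def by linarith+
  have "segment x i N = segment x i p @ segment x j k @ segment x (j + int k) (N - p - k)"
    by (subst N) (simp add: segment_add add.assoc j)
  then show ?thesis
    unfolding sublist_def by blast
qed

lemma Xsub_eq_segment: "Xsub \<theta> = {x. \<forall>i k. legal \<theta> (segment x i k)}"
  by (simp add: Xsub_def segment_def)

lemma legal_sublist: "legal \<theta> w \<Longrightarrow> sublist v w \<Longrightarrow> legal \<theta> v"
  unfolding legal_def by (meson sublist_order.order_trans)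

lemma legal_Nil: "legal \<theta> []"
  unfolding legal_def by (rule exI[of _ 0]) auto

lemma Xsub_shift: "y \<in> Xsub \<theta> \<Longrightarrow> (\<lambda>i. y (i + t)) \<in> Xsub \<theta>"
  unfolding Xsub_eq_segment by (auto simp: segment_shift)

section \<open>Cut sequences\<close>

lemma strict_mono_int_SucI:
  fixes c :: "int \<Rightarrow> 'b::order"
  assumes "\<And>i. c i < c (i + 1)"
  shows "strict_mono c"
proof (rule strict_monoI)
  fix i j :: int
  assume "i < j"
  then show "c i < c j"
  proof (induction j rule: int_gr_induct)
    case (step j)
    then show ?case
      using assms[of j] by order
  qed (rule assms)
qed

locale cut_sequence =
  fixes c :: "int \<Rightarrow> int" and g :: "int \<Rightarrow> nat"
  assumes cut_succ: "c (i + 1) = c i + int (g i)"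
    and gap_pos: "0 < g i"
begin

lemma strict_mono_cut: "strict_mono c"
  by (rule strict_mono_int_SucI) (simp add: cut_succ gap_pos)

lemma cut_less_iff [simp]: "c i < c j \<longleftrightarrow> i < j"
  and cut_le_iff [simp]: "c i \<le> c j \<longleftrightarrow> i \<le> j"
  and cut_eq_iff [simp]: "c i = c j \<longleftrightarrow> i = j"
  using strict_mono_less strict_mono_less_eq strict_mono_eq strict_mono_cut by blast+

lemma cut_add: "c (a + int k) = c a + int (\<Sum>j<k. g (a + int j))"
proof (induction k)
  case (Suc k)
  have "c (a + int (Suc k)) = c (a + int k) + int (g (a + int k))"
    using cut_succ[of "a + int k"] by (simp add: algebra_simps)
  with Suc show ?case
    by simp
qed simp

lemma segment_cut_add:
  "segment x (c a) (\<Sum>j<k. g (a + int j)) = concat (map (\<lambda>j. segment x (c (a + int j)) (g (a + int j))) [0..<k])"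
  by (induction k) (simp_all add: segment_add cut_add)

lemma cut_lower_bound: "i \<le> j \<Longrightarrow> c i + (j - i) \<le> c j"
proof (induction j rule: int_ge_induct)
  case (step j)
  then show ?case
    using cut_succ[of j] gap_pos[of j] by linarith
qed simp

lemma ex_block: "\<exists>i. c i \<le> m \<and> m < c (i + 1)"
proof -
  define i0 where "i0 = min 0 (m - c 0)"
  have "c i0 \<le> m"
    using cut_lower_bound[of i0 0] unfolding i0_def by linarith
  have "\<exists>i. c i \<le> m' \<and> m' < c (i + 1)" if "c i0 \<le> m'" for m'
    using that
  proof (induction m' rule: int_ge_induct)
    case base
    then show ?case
      using cut_succ[of i0] gap_pos[of i0] by (intro exI[of _ i0]) simp
  next
    case (step m')
    then obtain i where i: "c i \<le> m'" "m' < c (i + 1)"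
      by blast
    show ?case
    proof (cases "m' + 1 < c (i + 1)")
      case False
      then show ?thesis
        using i cut_succ[of "i + 1"] gap_pos[of "i + 1"] by (intro exI[of _ "i + 1"]) simp
    qed (use i in \<open>intro exI[of _ i], simp\<close>)
  qed
  with \<open>c i0 \<le> m\<close> show ?thesis
    by blast
qed

lemma block_unique: "c i \<le> m \<Longrightarrow> m < c (i + 1) \<Longrightarrow> c j \<le> m \<Longrightarrow> m < c (j + 1) \<Longrightarrow> i = j"
  using cut_less_iff[of i "j + 1"] cut_less_iff[of j "i + 1"] by linarith

definition block_index :: "int \<Rightarrow> int" where
  "block_index m = (THE i. c i \<le> m \<and> m < c (i + 1))"

lemma block_index_eq: "c i \<le> m \<Longrightarrow> m < c (i + 1) \<Longrightarrow> block_index m = i"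
  unfolding block_index_def by (rule the_equality) (auto intro: block_unique)

lemma block_index_cut_add: "j < g i \<Longrightarrow> block_index (c i + int j) = i"
  by (rule block_index_eq) (simp_all add: cut_succ)

lemma ex_cut_add: "\<exists>i j. j < g i \<and> m = c i + int j"
proof -
  obtain i where "c i \<le> m" "m < c (i + 1)"
    using ex_block by blast
  then show ?thesis
    using cut_succ[of i] by (intro exI[of _ i] exI[of _ "nat (m - c i)"]) auto
qed

lemma ext_segments:
  assumes "\<And>i. segment x (c i) (g i) = segment x' (c i) (g i)"
  shows "x = x'"
proof
  fix m
  obtain i j where "j < g i" "m = c i + int j"
    using ex_cut_add by blast
  then show "x m = x' m"
    using nth_segment[of j "g i" x "c i"] nth_segment[of j "g i" x' "c i"] assms[of i] by simp
qed

lemma cut_diff_const: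
  assumes "cut_sequence c' g"
  shows "c' i - c i = c' 0 - c 0"
proof (induction i rule: int_induct[where k = 0])
  case (step1 i)
  then show ?case
    using cut_succ[of i] cut_sequence.cut_succ[OF assms, of i] by simp
next
  case (step2 i)
  then show ?case
    using cut_succ[of "i - 1"] cut_sequence.cut_succ[OF assms, of "i - 1"] by simp
qed simp

definition glue :: "(int \<Rightarrow> 'a list) \<Rightarrow> int \<Rightarrow> 'a" where
  "glue W m = W (block_index m) ! nat (m - c (block_index m))"

lemma glue_cut_add: "j < g i \<Longrightarrow> glue W (c i + int j) = W i ! j"
  by (simp add: glue_def block_index_cut_add)

lemma segment_glue: "length (W i) = g i \<Longrightarrow> segment (glue W) (c i) (g i) = W i"
  by (rule nth_equalityI) (simp_all add: glue_cut_add)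

end

lemma ex_cut_sequence:
  assumes "\<And>i. 0 < g i"
  shows "\<exists>c. cut_sequence c g"
proof -
  define c :: "int \<Rightarrow> int" where
    "c i = (if 0 \<le> i then \<Sum>j\<in>{0..<i}. int (g j) else - (\<Sum>j\<in>{i..<0}. int (g j)))" for i
  have "c (i + 1) = c i + int (g i)" for i
  proof (cases "0 \<le> i")
    case True
    then have "{0..<i + 1} = insert i {0..<i}"
      by auto
    with True show ?thesis
      unfolding c_def by (simp add: add.commute)
  next
    case False
    then have "{i..<0} = insert i {i + 1..<0}"
      by auto
    with False show ?thesis
      unfolding c_def by (cases "i + 1 = 0") simp_all
  qed
  with assms have "cut_sequence c g"
    by unfold_locales
  then show ?thesis
    by blast
qed

lemma (in cut_sequence) ex_refined_cut_sequence:
  assumes e: "cut_sequence e (\<lambda>i. length (WS i))"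
    and len: "\<And>i. g i = length (concat (WS i))"
    and ne: "\<And>i j. j < length (WS i) \<Longrightarrow> WS i ! j \<noteq> []"
  obtains d where "cut_sequence d (\<lambda>k. length (cut_sequence.glue e WS k))"
    and "\<And>i j. j < length (WS i) \<Longrightarrow> d (e i + int j) = c i + int (length (concat (take j (WS i))))"
proof -
  interpret e: cut_sequence e "\<lambda>i. length (WS i)"
    by (rule e)
  define d where "d k = c (e.block_index k) +
      int (length (concat (take (nat (k - e (e.block_index k))) (WS (e.block_index k)))))" for k
  have d_eq: "d (e i + int j) = c i + int (length (concat (take j (WS i))))" if "j < length (WS i)" for i j
    using that by (simp add: d_def e.block_index_cut_add)
  have "cut_sequence d (\<lambda>k. length (e.glue WS k))"
  proof
    fix k
    obtain i j where ij: "j < length (WS i)" "k = e i + int j"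
      using e.ex_cut_add by blast
    then have glue: "e.glue WS k = WS i ! j"
      by (simp add: e.glue_cut_add)
    then show "0 < length (e.glue WS k)"
      using ne[OF ij(1)] by simp
    show "d (k + 1) = d k + int (length (e.glue WS k))"
    proof (cases "Suc j < length (WS i)")
      case True
      then have "d (k + 1) = c i + int (length (concat (take (Suc j) (WS i))))"
        using d_eq[of "Suc j" i] ij(2) by (simp add: algebra_simps)
      then show ?thesis
        using d_eq[OF ij(1)] ij glue by (simp add: take_Suc_conv_app_nth)
    next
      case False
      then have WS: "WS i = take j (WS i) @ [WS i ! j]"
        using ij(1) take_Suc_conv_app_nth[of j "WS i"] by simp
      have "k + 1 = e (i + 1) + int 0"
        using False ij e.cut_succ[of i] by simp
      then have "d (k + 1) = c (i + 1)"
        using d_eq[of 0 "i + 1"] e.gap_pos[of "i + 1"] by simp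
      also have "\<dots> = c i + int (length (concat (WS i)))"
        using cut_succ[of i] len[of i] by simp
      also have "concat (WS i) = concat (take j (WS i)) @ WS i ! j"
        by (subst (1) WS) simp
      finally show ?thesis
        using d_eq[OF ij(1)] ij(2) glue by simp
    qed
  qed
  with d_eq that show ?thesis
    by blast
qed

section \<open>Images of words\<close>

lemma subst_word_append:
  "subst_word \<theta> (u @ v) = {w @ w' | w w'. w \<in> subst_word \<theta> u \<and> w' \<in> subst_word \<theta> v}"
proof (induction u)
  case (Cons a u)
  show ?case
  proof (intro Set.set_eqI iffI)
    fix x
    assume "x \<in> subst_word \<theta> ((a # u) @ v)"
    then obtain w1 w2 w3 where "x = w1 @ w2 @ w3" "w1 \<in> \<theta> a"
      "w2 \<in> subst_word \<theta> u" "w3 \<in> subst_word \<theta> v"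
      by (auto simp: Cons.IH)
    then show "x \<in> {w @ w' | w w'. w \<in> subst_word \<theta> (a # u) \<and> w' \<in> subst_word \<theta> v}"
      by (intro CollectI exI[of _ "w1 @ w2"] exI[of _ w3]) auto
  next
    fix x
    assume "x \<in> {w @ w' | w w'. w \<in> subst_word \<theta> (a # u) \<and> w' \<in> subst_word \<theta> v}"
    then obtain w1 w2 w3 where "x = w1 @ w2 @ w3" "w1 \<in> \<theta> a"
      "w2 \<in> subst_word \<theta> u" "w3 \<in> subst_word \<theta> v"
      by auto
    then show "x \<in> subst_word \<theta> ((a # u) @ v)"
      by (auto simp: Cons.IH)
  qed
qed simp

lemma subst_word_conv_concat:
  "subst_word \<theta> u = {concat ws | ws. list_all2 (\<lambda>a w. w \<in> \<theta> a) u ws}"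
proof (induction u)
  case (Cons a u)
  show ?case
  proof (intro Set.set_eqI iffI)
    fix x
    assume "x \<in> subst_word \<theta> (a # u)"
    then obtain w ws where "x = w @ concat ws" "w \<in> \<theta> a" "list_all2 (\<lambda>a w. w \<in> \<theta> a) u ws"
      by (auto simp: Cons.IH)
    then show "x \<in> {concat ws | ws. list_all2 (\<lambda>a w. w \<in> \<theta> a) (a # u) ws}"
      by (intro CollectI exI[of _ "w # ws"]) simp
  next
    fix x
    assume "x \<in> {concat ws | ws. list_all2 (\<lambda>a w. w \<in> \<theta> a) (a # u) ws}"
    then obtain w ws where "x = w @ concat ws" "w \<in> \<theta> a" "list_all2 (\<lambda>a w. w \<in> \<theta> a) u ws"
      by (auto simp: list_all2_Cons1)
    then show "x \<in> subst_word \<theta> (a # u)"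
      by (auto simp: Cons.IH)
  qed
qed simp

lemma subst_word_ne:
  assumes "\<And>a. \<theta> a \<noteq> {}"
  shows "subst_word \<theta> u \<noteq> {}"
proof (induction u)
  case (Cons a u)
  then obtain w w' where "w \<in> \<theta> a" "w' \<in> subst_word \<theta> u"
    using assms by blast
  then show ?case
    by auto
qed simp

lemma finite_subst_word:
  assumes "\<And>a. finite (\<theta> a)"
  shows "finite (subst_word \<theta> u)"
proof (induction u)
  case (Cons a u)
  have "subst_word \<theta> (a # u) = (\<lambda>(w, w'). w @ w') ` (\<theta> a \<times> subst_word \<theta> u)"
    by auto
  then show ?case
    using Cons assms by simp
qed simp

lemma subst_word_sublist:
  assumes "sublist v V" "w \<in> subst_word \<theta> v" "\<And>a. \<theta> a \<noteq> {}"
  shows "\<exists>W\<in>subst_word \<theta> V. sublist w W"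
proof -
  obtain A B where "V = A @ v @ B"
    using assms(1) unfolding sublist_def by blast
  moreover obtain wA wB where "wA \<in> subst_word \<theta> A" "wB \<in> subst_word \<theta> B"
    using subst_word_ne[of \<theta>, OF assms(3)] by blast
  ultimately have "wA @ w @ wB \<in> subst_word \<theta> V"
    using assms(2) by (auto simp: subst_word_append)
  then show ?thesis
    unfolding sublist_def by blast
qed

lemma subst_word_subst_pow_0: "subst_word (subst_pow \<theta> 0) u = {u}"
  by (induction u) auto

lemma subst_word_subst_pow_Suc:
  "subst_word (subst_pow \<theta> (Suc n)) u = (\<Union>v\<in>subst_word (subst_pow \<theta> n) u. subst_word \<theta> v)"
proof (induction u)
  case (Cons a u)
  show ?case
  proof (intro Set.set_eqI iffI)
    fix x
    assume "x \<in> subst_word (subst_pow \<theta> (Suc n)) (a # u)"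
    then obtain w1 w2 where x: "x = w1 @ w2" and "w1 \<in> subst_pow \<theta> (Suc n) a"
      and "w2 \<in> subst_word (subst_pow \<theta> (Suc n)) u"
      by (auto simp del: subst_pow.simps)
    then obtain v1 v2 where "v1 \<in> subst_pow \<theta> n a" "w1 \<in> subst_word \<theta> v1"
      "v2 \<in> subst_word (subst_pow \<theta> n) u" "w2 \<in> subst_word \<theta> v2"
      using Cons.IH by auto
    then show "x \<in> (\<Union>v\<in>subst_word (subst_pow \<theta> n) (a # u). subst_word \<theta> v)"
      by (intro UN_I[of "v1 @ v2"]) (auto simp: x subst_word_append)
  next
    fix x
    assume "x \<in> (\<Union>v\<in>subst_word (subst_pow \<theta> n) (a # u). subst_word \<theta> v)"
    then obtain v1 v2 w1 w2 where "x = w1 @ w2" "v1 \<in> subst_pow \<theta> n a" "w1 \<in> subst_word \<theta> v1"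
      "v2 \<in> subst_word (subst_pow \<theta> n) u" "w2 \<in> subst_word \<theta> v2"
      by (auto simp: subst_word_append)
    then have "w1 \<in> subst_pow \<theta> (Suc n) a" "w2 \<in> subst_word (subst_pow \<theta> (Suc n)) u"
      unfolding Cons.IH by auto
    then show "x \<in> subst_word (subst_pow \<theta> (Suc n)) (a # u)"
      using \<open>x = w1 @ w2\<close> by (auto simp del: subst_pow.simps)
  qed
qed simp

lemma subst_pow_add:
  "subst_pow \<theta> (n + m) b = (\<Union>u\<in>subst_pow \<theta> n b. subst_word (subst_pow \<theta> m) u)"
proof (induction m)
  case (Suc m)
  have "subst_pow \<theta> (n + Suc m) b = (\<Union>v\<in>subst_pow \<theta> (n + m) b. subst_word \<theta> v)"
    by simp
  also have "\<dots> = (\<Union>u\<in>subst_pow \<theta> n b. \<Union>v\<in>subst_word (subst_pow \<theta> m) u. subst_word \<theta> v)"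
    unfolding Suc.IH by blast
  also have "\<dots> = (\<Union>u\<in>subst_pow \<theta> n b. subst_word (subst_pow \<theta> (Suc m)) u)"
    by (simp only: subst_word_subst_pow_Suc)
  finally show ?case .
qed (simp del: subst_pow.simps add: subst_word_subst_pow_0)

lemma subst_pow_1 [simp]: "subst_pow \<theta> 1 = \<theta>" "subst_pow \<theta> (Suc 0) = \<theta>"
  by (rule ext, simp)+

lemma subst_pow_Suc_via_subst: "subst_pow \<theta> (Suc n) b = (\<Union>u\<in>\<theta> b. subst_word (subst_pow \<theta> n) u)"
  using subst_pow_add[of \<theta> 1 n b] by simp

section \<open>Homomorphic images of even permutations\<close>

lemma evenperm_if_cube_id:
  assumes "permutation f" "f \<circ> f \<circ> f = id"
  shows "evenperm f"
  using evenperm_comp[OF permutation_compose[OF assms(1,1)] assms(1)] evenperm_comp[OF assms(1,1)] assms(2)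
  by simp

locale perm_hom =
  fixes S :: "'a set" and h :: "('a \<Rightarrow> 'a) \<Rightarrow> 'b \<Rightarrow> 'b"
  assumes finite_S: "finite S"
    and hom_comp: "p permutes S \<Longrightarrow> q permutes S \<Longrightarrow> h (p \<circ> q) = h p \<circ> h q"
    and permutation_hom: "p permutes S \<Longrightarrow> permutation (h p)"
begin

lemma hom_id: "h id = id"
proof
  fix v
  have "h id (h id v) = h id v"
    using hom_comp[OF permutes_id permutes_id] by (metis comp_apply id_comp)
  then show "h id v = id v"
    using bij_is_inj[OF permutation_bijective[OF permutation_hom[OF permutes_id]]] by (simp add: inj_eq)
qed

lemma evenperm_hom_3cycle:
  assumes "x \<in> S" "y \<in> S" "z \<in> S" "x \<noteq> y" "y \<noteq> z"
  shows "evenperm (h (transpose x y \<circ> transpose y z))"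
proof -
  define c where "c = transpose x y \<circ> transpose y z"
  have c: "c permutes S"
    unfolding c_def using assms by (intro permutes_compose permutes_swap_id)
  have "c \<circ> c \<circ> c = id"
    unfolding c_def using assms(4,5) by (intro ext) (simp add: transpose_def)
  then have "h c \<circ> h c \<circ> h c = id"
    using hom_comp c permutes_compose hom_id by metis
  then show ?thesis
    unfolding c_def[symmetric] by (intro evenperm_if_cube_id permutation_hom c)
qed

lemma evenperm_hom_transpose_comp:
  assumes S: "x1 \<in> S" "y1 \<in> S" "x2 \<in> S" "y2 \<in> S" and neq: "x1 \<noteq> y1" "x2 \<noteq> y2"
  shows "evenperm (h (transpose x1 y1 \<circ> transpose x2 y2))"
proof (cases "y1 = x2")
  case True
  then show ?thesis
    using evenperm_hom_3cycle[OF S(1,2,4)] neq by simp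
next
  case False
  have split: "transpose x1 y1 \<circ> transpose x2 y2 =
      (transpose x1 y1 \<circ> transpose y1 x2) \<circ> (transpose y1 x2 \<circ> transpose x2 y2)"
    by (simp add: comp_assoc[symmetric]) (simp add: comp_assoc transpose_comp_involutory)
  have p1: "transpose x1 y1 \<circ> transpose y1 x2 permutes S" and p2: "transpose y1 x2 \<circ> transpose x2 y2 permutes S"
    using S by (simp_all add: permutes_compose permutes_swap_id)
  show ?thesis
    unfolding split hom_comp[OF p1 p2]
    using evenperm_comp[OF permutation_hom[OF p1] permutation_hom[OF p2]]
      evenperm_hom_3cycle[OF S(1,2,3) neq(1) False] evenperm_hom_3cycle[OF S(2,3,4) False neq(2)] by simp
qed

lemma evenperm_hom_transpose_eq:
  assumes S: "x1 \<in> S" "y1 \<in> S" "x2 \<in> S" "y2 \<in> S" and neq: "x1 \<noteq> y1" "x2 \<noteq> y2"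
  shows "evenperm (h (transpose x1 y1)) = evenperm (h (transpose x2 y2))"
proof -
  have p1: "transpose x1 y1 permutes S" and p2: "transpose x2 y2 permutes S"
    using S by (simp_all add: permutes_swap_id)
  show ?thesis
    using evenperm_hom_transpose_comp[OF S neq] evenperm_comp[OF permutation_hom[OF p1] permutation_hom[OF p2]]
    by (simp add: hom_comp[OF p1 p2])
qed

(* All transpositions have images of the same parity, and an even permutation is a product of an
   even number of transpositions. *)
lemma evenperm_hom:
  assumes p: "p permutes S" and "evenperm p"
  shows "evenperm (h p)"
proof -
  define E where "E \<longleftrightarrow> (\<forall>x\<in>S. \<forall>y\<in>S. x \<noteq> y \<longrightarrow> evenperm (h (transpose x y)))"
  have E: "evenperm (h (transpose x y)) = E" if "x \<in> S" "y \<in> S" "x \<noteq> y" for x y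
    unfolding E_def using evenperm_hom_transpose_eq[OF that(1,2) _ _ that(3)] that by blast
  have "evenperm (h p) = (evenperm p \<or> E)"
    using p finite_S
  proof (induction p rule: permutes_induct)
    case id
    show ?case
      by (simp only: hom_id) simp
  next
    case (swap x y q)
    have t: "transpose x y permutes S"
      using swap.hyps by (simp add: permutes_swap_id)
    have "permutation q"
      using swap.hyps(4) finite_S by (rule permutes_imp_permutation[rotated])
    then have "evenperm (transpose x y \<circ> q) = (evenperm (transpose x y) = evenperm q)"
      by (rule evenperm_comp[OF permutation_swap_id])
    then have parity: "evenperm (transpose x y \<circ> q) = (\<not> evenperm q)"
      using swap.hyps(3) by (simp only: evenperm_swap) simp
    have "evenperm (h (transpose x y \<circ> q)) = (evenperm (h (transpose x y)) = evenperm (h q))"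
      unfolding hom_comp[OF t swap.hyps(4)]
      by (rule evenperm_comp[OF permutation_hom[OF t] permutation_hom[OF swap.hyps(4)]])
    then show ?case
      unfolding parity swap.IH E[OF swap.hyps(1-3)] by blast
  qed
  with assms(2) show ?thesis
    by simp
qed

end

section \<open>Decompositions into inflation words\<close>

locale compatible_subst =
  fixes \<theta> :: "'a \<Rightarrow> 'a list set"
  assumes rand_subst: "rand_subst \<theta>" and compatible: "compatible \<theta>"
begin

abbreviation infl_len :: "nat \<Rightarrow> 'a \<Rightarrow> nat" where
  "infl_len n \<equiv> slen (subst_pow \<theta> n)"

lemma subst_ne: "\<theta> a \<noteq> {}" and finite_subst: "finite (\<theta> a)" and Nil_notin_subst: "[] \<notin> \<theta> a"
  using rand_subst unfolding rand_subst_def by auto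

lemma subst_pow_ne: "subst_pow \<theta> n a \<noteq> {}"
proof (induction n)
  case (Suc n)
  then obtain v where "v \<in> subst_pow \<theta> n a"
    by blast
  moreover obtain w where "w \<in> subst_word \<theta> v"
    using subst_word_ne[of \<theta>, OF subst_ne] by blast
  ultimately show ?case
    by auto
qed simp

lemma finite_subst_pow: "finite (subst_pow \<theta> n a)"
  by (induction n) (auto intro: finite_subst_word finite_subst)

lemma Nil_notin_subst_pow: "[] \<notin> subst_pow \<theta> n a"
proof (induction n)
  case (Suc n)
  have "[] \<notin> subst_word \<theta> v" if "v \<in> subst_pow \<theta> n a" for v
    using that Suc Nil_notin_subst by (cases v) auto
  then show ?case
    by auto
qed simp

definition subst_mset :: "'a \<Rightarrow> 'a multiset" where
  "subst_mset b = mset (SOME u. u \<in> \<theta> b)"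

lemma mset_subst: "u \<in> \<theta> b \<Longrightarrow> mset u = subst_mset b"
  unfolding subst_mset_def
  by (rule multiset_eqI) (metis compatible compatible_def someI)

lemma mset_subst_word: "w \<in> subst_word \<theta> v \<Longrightarrow> mset w = (\<Sum>a\<in>#mset v. subst_mset a)"
proof (induction v arbitrary: w)
  case (Cons a v)
  then obtain u w' where "w = u @ w'" "u \<in> \<theta> a" "w' \<in> subst_word \<theta> v"
    by auto
  with Cons.IH show ?case
    by (simp add: mset_subst)
qed simp

lemma mset_subst_pow_eq: "w \<in> subst_pow \<theta> n a \<Longrightarrow> w' \<in> subst_pow \<theta> n a \<Longrightarrow> mset w = mset w'"
proof (induction n arbitrary: w w')
  case (Suc n)
  then obtain v v' where "v \<in> subst_pow \<theta> n a" "w \<in> subst_word \<theta> v"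
    "v' \<in> subst_pow \<theta> n a" "w' \<in> subst_word \<theta> v'"
    by auto
  moreover from this have "mset v = mset v'"
    using Suc.IH by blast
  ultimately show ?case
    by (simp add: mset_subst_word)
qed simp

lemma length_subst_pow: "w \<in> subst_pow \<theta> n a \<Longrightarrow> length w = infl_len n a"
  unfolding slen_def by (metis mset_subst_pow_eq size_mset someI)

lemma infl_len_pos: "0 < infl_len n a"
  using subst_pow_ne[of n a] Nil_notin_subst_pow[of n a] length_subst_pow
  by (metis equals0I length_greater_0_conv)

lemma infl_len_0 [simp]: "infl_len 0 a = 1"
  using length_subst_pow[of "[a]" 0 a] by simp

definition factorisation :: "nat \<Rightarrow> 'a list \<Rightarrow> 'a list list \<Rightarrow> bool" where
  "factorisation m u ws \<longleftrightarrow> list_all2 (\<lambda>a w. w \<in> subst_pow \<theta> m a) u ws"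

lemma subst_word_subst_pow_conv_factorisation:
  "subst_word (subst_pow \<theta> m) u = {concat ws | ws. factorisation m u ws}"
  unfolding factorisation_def by (rule subst_word_conv_concat)

lemma factorisation_length: "factorisation m u ws \<Longrightarrow> length ws = length u"
  unfolding factorisation_def by (simp add: list_all2_lengthD)

lemma factorisation_nth: "factorisation m u ws \<Longrightarrow> j < length u \<Longrightarrow> ws ! j \<in> subst_pow \<theta> m (u ! j)"
  unfolding factorisation_def by (simp add: list_all2_conv_all_nth)

lemma factorisationI:
  "length ws = length u \<Longrightarrow> (\<And>j. j < length u \<Longrightarrow> ws ! j \<in> subst_pow \<theta> m (u ! j)) \<Longrightarrow> factorisation m u ws"
  unfolding factorisation_def by (simp add: list_all2_conv_all_nth)

definition decomp :: "nat \<Rightarrow> (int \<Rightarrow> 'a) \<Rightarrow> (int \<Rightarrow> int) \<Rightarrow> (int \<Rightarrow> 'a) \<Rightarrow> bool" where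
  "decomp n x c y \<longleftrightarrow> (\<forall>i. c (i + 1) = c i + int (infl_len n (y i)) \<and>
      segment x (c i) (infl_len n (y i)) \<in> subst_pow \<theta> n (y i))"

lemma decompI:
  "cut_sequence c (\<lambda>i. infl_len n (y i)) \<Longrightarrow> (\<And>i. segment x (c i) (infl_len n (y i)) \<in> subst_pow \<theta> n (y i))
    \<Longrightarrow> decomp n x c y"
  unfolding decomp_def by (simp add: cut_sequence.cut_succ)

lemma decomp_cut_sequence: "decomp n x c y \<Longrightarrow> cut_sequence c (\<lambda>i. infl_len n (y i))"
  unfolding decomp_def by unfold_locales (simp_all add: infl_len_pos)

lemma decomp_block: "decomp n x c y \<Longrightarrow> segment x (c i) (infl_len n (y i)) \<in> subst_pow \<theta> n (y i)"
  unfolding decomp_def by blast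

lemma decomp_shift_index: "decomp n x c y \<Longrightarrow> decomp n x (\<lambda>i. c (i + t)) (\<lambda>i. y (i + t))"
  unfolding decomp_def by (metis add.commute add.left_commute)

lemma decomp_shift: "decomp n (\<lambda>m. x (m + s)) c y \<longleftrightarrow> decomp n x (\<lambda>i. c i + s) y"
  unfolding decomp_def by (auto simp: segment_shift algebra_simps)

lemma decomp_iff_blocks:
  "decomp n x c y \<longleftrightarrow> (\<exists>w. (\<forall>i. w i \<in> subst_pow \<theta> n (y i)) \<and>
      (\<forall>i. c (i + 1) = c i + int (length (w i))) \<and> (\<forall>i j. j < length (w i) \<longrightarrow> x (c i + int j) = w i ! j))"
proof
  assume p: "decomp n x c y"
  then show "\<exists>w. (\<forall>i. w i \<in> subst_pow \<theta> n (y i)) \<and>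
      (\<forall>i. c (i + 1) = c i + int (length (w i))) \<and> (\<forall>i j. j < length (w i) \<longrightarrow> x (c i + int j) = w i ! j)"
    by (intro exI[of _ "\<lambda>i. segment x (c i) (infl_len n (y i))"]) (simp add: decomp_block decomp_def)
next
  assume "\<exists>w. (\<forall>i. w i \<in> subst_pow \<theta> n (y i)) \<and>
      (\<forall>i. c (i + 1) = c i + int (length (w i))) \<and> (\<forall>i j. j < length (w i) \<longrightarrow> x (c i + int j) = w i ! j)"
  then obtain w where w: "\<And>i. w i \<in> subst_pow \<theta> n (y i)" "\<And>i. c (i + 1) = c i + int (length (w i))"
    "\<And>i j. j < length (w i) \<Longrightarrow> x (c i + int j) = w i ! j"
    by blast
  have "segment x (c i) (infl_len n (y i)) = w i" for i
    by (rule nth_equalityI) (simp_all add: w(3) length_subst_pow[OF w(1)])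
  then show "decomp n x c y"
    unfolding decomp_def using w(1,2) length_subst_pow by simp
qed

lemma decomp_shift_back: "decomp n (shift_back k x) c y \<longleftrightarrow> decomp n x (\<lambda>i. c i - int k) y"
  using decomp_shift[of n x "- int k" c y] by (simp add: shift_back_def)

lemma in_image_iff_decomp: "in_image \<theta> y x \<longleftrightarrow> (\<exists>c. c 0 = 0 \<and> decomp 1 x c y)"
  unfolding in_image_def decomp_iff_blocks by auto

lemma ex_decomp_with_blocks:
  assumes c: "cut_sequence c (\<lambda>i. infl_len n (y i))" and V: "\<And>i. V i \<in> subst_pow \<theta> n (y i)"
  obtains x where "decomp n x c y" "\<And>i. segment x (c i) (infl_len n (y i)) = V i"
proof -
  interpret cut_sequence c "\<lambda>i. infl_len n (y i)"
    by (rule c)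
  have blocks: "segment (glue V) (c i) (infl_len n (y i)) = V i" for i
    by (rule segment_glue) (rule length_subst_pow[OF V])
  then have "decomp n (glue V) c y"
    using c V by (intro decompI) simp_all
  with blocks that show ?thesis
    by blast
qed

lemma decomp_same_types:
  assumes "decomp n x c y" "decomp n x' c' y" "c 0 = c' 0"
  shows "c = c'"
  using cut_sequence.cut_diff_const[OF decomp_cut_sequence decomp_cut_sequence, OF assms(1,2)] assms(3)
  by fastforce

lemma decomp_segment_subst_word:
  assumes "decomp n x c y"
  shows "segment x (c a) (\<Sum>j<k. infl_len n (y (a + int j))) \<in> subst_word (subst_pow \<theta> n) (segment y a k)"
proof -
  interpret cut_sequence c "\<lambda>i. infl_len n (y i)"
    using assms by (rule decomp_cut_sequence)
  have "factorisation n (segment y a k) (map (\<lambda>j. segment x (c (a + int j)) (infl_len n (y (a + int j)))) [0..<k])"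
    by (rule factorisationI) (simp_all add: decomp_block[OF assms])
  then show ?thesis
    by (auto simp: segment_cut_add subst_word_subst_pow_conv_factorisation)
qed

lemma decomp_Xsub:
  assumes p: "decomp n x c y" and y: "y \<in> Xsub \<theta>"
  shows "x \<in> Xsub \<theta>"
  unfolding Xsub_eq_segment
proof (intro CollectI allI)
  interpret cut_sequence c "\<lambda>i. infl_len n (y i)"
    using p by (rule decomp_cut_sequence)
  fix i k
  show "legal \<theta> (segment x i k)"
  proof (cases "k = 0")
    case False
    obtain a where a: "c a \<le> i" "i < c (a + 1)"
      using ex_block by blast
    obtain b where b: "c b \<le> i + int k - 1" "i + int k - 1 < c (b + 1)"
      using ex_block by blast
    have "a \<le> b"
      using a b False cut_le_iff[of "b + 1" a] by linarith
    define K where "K = nat (b - a) + 1"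
    define l where "l = (\<Sum>j<K. infl_len n (y (a + int j)))"
    have "c (b + 1) = c a + int l"
      using cut_add[of a K] \<open>a \<le> b\<close> unfolding K_def l_def by (simp add: add.commute)
    have "legal \<theta> (segment y a K)"
      using y unfolding Xsub_eq_segment by blast
    then obtain p a0 V where V: "V \<in> subst_pow \<theta> p a0" "sublist (segment y a K) V"
      unfolding legal_def by blast
    obtain W where W: "W \<in> subst_word (subst_pow \<theta> n) V" "sublist (segment x (c a) l) W"
      using subst_word_sublist[OF V(2) decomp_segment_subst_word[OF p] subst_pow_ne] unfolding l_def
      by blast
    have "W \<in> subst_pow \<theta> (p + n) a0"
      using V(1) W(1) by (auto simp: subst_pow_add)
    then have "legal \<theta> (segment x (c a) l)"
      unfolding legal_def using W(2) by blast
    moreover have "sublist (segment x i k) (segment x (c a) l)"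
      by (rule sublist_segment) (use a b \<open>c (b + 1) = c a + int l\<close> in linarith)+
    ultimately show ?thesis
      by (rule legal_sublist)
  qed (simp add: legal_Nil)
qed

lemma decomp_compose:
  assumes d: "decomp m x d z" and e: "decomp n z e y"
  shows "decomp (n + m) x (\<lambda>i. d (e i)) y"
  unfolding decomp_def
proof (intro allI conjI)
  interpret d: cut_sequence d "\<lambda>i. infl_len m (z i)"
    using d by (rule decomp_cut_sequence)
  fix i
  define l where "l = (\<Sum>j<infl_len n (y i). infl_len m (z (e i + int j)))"
  have "segment x (d (e i)) l \<in> (\<Union>u\<in>subst_pow \<theta> n (y i). subst_word (subst_pow \<theta> m) u)"
    using decomp_segment_subst_word[OF d] decomp_block[OF e] unfolding l_def by blast
  then have l_mem: "segment x (d (e i)) l \<in> subst_pow \<theta> (n + m) (y i)"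
    by (simp only: subst_pow_add)
  then have l_eq: "l = infl_len (n + m) (y i)"
    using length_subst_pow by fastforce
  have "e (i + 1) = e i + int (infl_len n (y i))"
    using e unfolding decomp_def by blast
  then show "d (e (i + 1)) = d (e i) + int (infl_len (n + m) (y i))"
    using d.cut_add[of "e i" "infl_len n (y i)"] l_eq unfolding l_def by (simp del: of_nat_sum)
  show "segment x (d (e i)) (infl_len (n + m) (y i)) \<in> subst_pow \<theta> (n + m) (y i)"
    using l_mem l_eq by simp
qed

lemma ex_factorisations:
  assumes "decomp (n + m) x c y"
  obtains U WS where "\<And>i. U i \<in> subst_pow \<theta> n (y i)" "\<And>i. factorisation m (U i) (WS i)"
    "\<And>i. concat (WS i) = segment x (c i) (infl_len (n + m) (y i))"
proof -
  have "\<exists>u ws. u \<in> subst_pow \<theta> n (y i) \<and> factorisation m u ws \<and>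
      concat ws = segment x (c i) (infl_len (n + m) (y i))" for i
  proof -
    obtain u where "u \<in> subst_pow \<theta> n (y i)"
      and "segment x (c i) (infl_len (n + m) (y i)) \<in> subst_word (subst_pow \<theta> m) u"
      using decomp_block[OF assms, of i] unfolding subst_pow_add by blast
    then show ?thesis
      unfolding subst_word_subst_pow_conv_factorisation by force
  qed
  then show ?thesis
    using that by metis
qed

lemma decomp_refine:
  assumes p: "decomp (n + m) x c y"
    and U: "\<And>i. U i \<in> subst_pow \<theta> n (y i)" and WS: "\<And>i. factorisation m (U i) (WS i)"
    and concat_WS: "\<And>i. concat (WS i) = segment x (c i) (infl_len (n + m) (y i))"
  obtains d z e where "decomp m x d z" "decomp n z e y" "\<And>i. d (e i) = c i"
    "\<And>i. segment z (e i) (infl_len n (y i)) = U i"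
    "\<And>i j. j < infl_len n (y i) \<Longrightarrow> segment x (d (e i + int j)) (infl_len m (z (e i + int j))) = WS i ! j"
proof -
  interpret c: cut_sequence c "\<lambda>i. infl_len (n + m) (y i)"
    using p by (rule decomp_cut_sequence)
  have len_U: "length (U i) = infl_len n (y i)" for i
    using U length_subst_pow by blast
  have len_WS: "length (WS i) = infl_len n (y i)" for i
    using factorisation_length[OF WS] len_U by simp
  have WS_nth: "WS i ! j \<in> subst_pow \<theta> m (U i ! j)" if "j < infl_len n (y i)" for i j
    using factorisation_nth[OF WS] that len_U by simp
  obtain e where "cut_sequence e (\<lambda>i. infl_len n (y i))"
    using ex_cut_sequence[of "\<lambda>i. infl_len n (y i)"] infl_len_pos by blast
  then interpret e: cut_sequence e "\<lambda>i. infl_len n (y i)" .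
  have e_WS: "cut_sequence e (\<lambda>i. length (WS i))"
    using len_WS e.cut_sequence_axioms by simp
  have len_concat: "infl_len (n + m) (y i) = length (concat (WS i))" for i
    using concat_WS[of i] by simp
  have WS_ne: "WS i ! j \<noteq> []" if "j < length (WS i)" for i j
    using that WS_nth Nil_notin_subst_pow len_WS by metis
  obtain d where d: "cut_sequence d (\<lambda>k. length (e.glue WS k))"
    and d_eq: "\<And>i j. j < length (WS i) \<Longrightarrow> d (e i + int j) = c i + int (length (concat (take j (WS i))))"
    using c.ex_refined_cut_sequence[OF e_WS len_concat WS_ne] by blast
  define z where "z = e.glue U"
  have segment_x: "segment x (d (e i + int j)) (length (WS i ! j)) = WS i ! j"
    if "j < infl_len n (y i)" for i j
    using segment_concat_nth[OF concat_WS[symmetric]] d_eq that len_WS by simp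
  have glue_WS: "e.glue WS k \<in> subst_pow \<theta> m (z k) \<and> segment x (d k) (length (e.glue WS k)) = e.glue WS k"
    for k
  proof -
    obtain i j where "j < infl_len n (y i)" "k = e i + int j"
      using e.ex_cut_add by blast
    then show ?thesis
      using WS_nth segment_x unfolding z_def by (simp add: e.glue_cut_add)
  qed
  then have len_glue: "length (e.glue WS k) = infl_len m (z k)" for k
    using length_subst_pow by blast
  then have "(\<lambda>k. length (e.glue WS k)) = (\<lambda>k. infl_len m (z k))"
    and blocks: "segment x (d k) (infl_len m (z k)) = e.glue WS k" "e.glue WS k \<in> subst_pow \<theta> m (z k)" for k
    using glue_WS by auto
  with d have "decomp m x d z"
    by (intro decompI) simp_all
  moreover have z: "segment z (e i) (infl_len n (y i)) = U i" for i
    unfolding z_def using e.segment_glue[of U] len_U by blast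
  then have "decomp n z e y"
    using U e.cut_sequence_axioms by (intro decompI) simp_all
  moreover have "d (e i) = c i" for i
    using d_eq[of 0 i] len_WS infl_len_pos by simp
  moreover have "segment x (d (e i + int j)) (infl_len m (z (e i + int j))) = WS i ! j"
    if "j < infl_len n (y i)" for i j
    using blocks that by (simp add: e.glue_cut_add)
  ultimately show ?thesis
    using that z by blast
qed

definition unique_decomposition :: "nat \<Rightarrow> bool" where
  "unique_decomposition n \<longleftrightarrow> (\<forall>x\<in>Xsub \<theta>. (\<exists>c y. decomp n x c y \<and> y \<in> Xsub \<theta>) \<and>
      (\<forall>c y c' y'. decomp n x c y \<longrightarrow> y \<in> Xsub \<theta> \<longrightarrow> decomp n x c' y' \<longrightarrow> y' \<in> Xsub \<theta> \<longrightarrow>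
         (\<exists>t. \<forall>i. c' i = c (i + t) \<and> y' i = y (i + t))))"

lemma unique_decompositionD:
  assumes "unique_decomposition n" "x \<in> Xsub \<theta>"
  shows "\<exists>c y. decomp n x c y \<and> y \<in> Xsub \<theta>"
    and "decomp n x c y \<Longrightarrow> y \<in> Xsub \<theta> \<Longrightarrow> decomp n x c' y' \<Longrightarrow> y' \<in> Xsub \<theta> \<Longrightarrow>
      \<exists>t. \<forall>i. c' i = c (i + t) \<and> y' i = y (i + t)"
  using assms unfolding unique_decomposition_def by blast+

lemma decomp_0_cut: "decomp 0 x c y \<Longrightarrow> c i = c 0 + i"
proof -
  assume "decomp 0 x c y"
  then have "cut_sequence c (\<lambda>_. 1)"
    using decomp_cut_sequence by fastforce
  moreover have "cut_sequence (\<lambda>i. i) (\<lambda>_. 1)"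
    by unfold_locales simp_all
  ultimately show "c i = c 0 + i"
    using cut_sequence.cut_diff_const[of c "\<lambda>_. 1" "\<lambda>i. i" i] by simp
qed

lemma decomp_0_type: "decomp 0 x c y \<Longrightarrow> y i = x (c i)"
  using decomp_block[of 0 x c y i] by simp

lemma decomp_0_id: "decomp 0 x (\<lambda>i. i) x"
  unfolding decomp_def by simp

lemma unique_decomposition_0: "unique_decomposition 0"
  unfolding unique_decomposition_def
proof (intro ballI conjI allI impI)
  fix x :: "int \<Rightarrow> 'a"
  show "\<exists>c y. decomp 0 x c y \<and> y \<in> Xsub \<theta>" if "x \<in> Xsub \<theta>"
    using that decomp_0_id by blast
  fix c y c' y'
  assume p: "decomp 0 x c y" and p': "decomp 0 x c' y'"
  have "c' i = c (i + (c' 0 - c 0))" for i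
    using decomp_0_cut[OF p, of "i + (c' 0 - c 0)"] decomp_0_cut[OF p', of i] by simp
  moreover have "y' i = y (i + (c' 0 - c 0))" for i
    using decomp_0_type[OF p, of "i + (c' 0 - c 0)"] decomp_0_type[OF p', of i] \<open>c' i = c (i + (c' 0 - c 0))\<close>
    by simp
  ultimately show "\<exists>t. \<forall>i. c' i = c (i + t) \<and> y' i = y (i + t)"
    by blast
qed

section \<open>Lifting permutations to the next level\<close>

definition perm_family :: "nat \<Rightarrow> ('a \<Rightarrow> 'a list \<Rightarrow> 'a list) \<Rightarrow> bool" where
  "perm_family n \<alpha> \<longleftrightarrow> (\<forall>a. \<alpha> a permutes subst_pow \<theta> n a)"

lemma perm_family_in: "perm_family n \<alpha> \<Longrightarrow> w \<in> subst_pow \<theta> n a \<Longrightarrow> \<alpha> a w \<in> subst_pow \<theta> n a"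
  unfolding perm_family_def by (simp add: permutes_in_image)

lemma perm_family_length: "perm_family n \<alpha> \<Longrightarrow> w \<in> subst_pow \<theta> n a \<Longrightarrow> length (\<alpha> a w) = infl_len n a"
  using perm_family_in length_subst_pow by blast

lemma perm_family_permutation: "perm_family n \<alpha> \<Longrightarrow> permutation (\<alpha> a)"
  unfolding perm_family_def using finite_subst_pow by (blast intro: permutes_imp_permutation)

lemma perm_family_id: "perm_family n (\<lambda>a. id)"
  unfolding perm_family_def by (simp add: permutes_id)

lemma perm_family_comp: "perm_family n \<alpha> \<Longrightarrow> perm_family n \<beta> \<Longrightarrow> perm_family n (\<lambda>a. \<beta> a \<circ> \<alpha> a)"
  unfolding perm_family_def by (simp add: permutes_compose)

lemma perm_family_inv: "perm_family n \<alpha> \<Longrightarrow> perm_family n (\<lambda>a. inv_into UNIV (\<alpha> a))"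
  unfolding perm_family_def by (simp add: permutes_inv)

definition unique_factorisation :: "nat \<Rightarrow> 'a \<Rightarrow> bool" where
  "unique_factorisation n b \<longleftrightarrow> (\<forall>u ws u' ws'. u \<in> \<theta> b \<longrightarrow> u' \<in> \<theta> b \<longrightarrow>
      factorisation n u ws \<longrightarrow> factorisation n u' ws' \<longrightarrow> concat ws = concat ws' \<longrightarrow> u = u' \<and> ws = ws')"

lemma subst_pow_Suc_iff_factorisation:
  "v \<in> subst_pow \<theta> (Suc n) b \<longleftrightarrow> (\<exists>u ws. u \<in> \<theta> b \<and> factorisation n u ws \<and> concat ws = v)"
  unfolding subst_pow_Suc_via_subst subst_word_subst_pow_conv_factorisation by blast

(* Words without a unique factorisation are fixed; by unique_factorisation_types below this
   case does not occur for types of sequences in the subshift. *)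
definition lift_perm :: "nat \<Rightarrow> ('a \<Rightarrow> 'a list \<Rightarrow> 'a list) \<Rightarrow> 'a \<Rightarrow> 'a list \<Rightarrow> 'a list" where
  "lift_perm n \<alpha> b v = (if unique_factorisation n b \<and> v \<in> subst_pow \<theta> (Suc n) b
      then (let (u, ws) = SOME (u, ws). u \<in> \<theta> b \<and> factorisation n u ws \<and> concat ws = v
            in concat (map2 \<alpha> u ws))
      else v)"

lemma lift_perm_eq:
  assumes "unique_factorisation n b" "u \<in> \<theta> b" "factorisation n u ws"
  shows "lift_perm n \<alpha> b (concat ws) = concat (map2 \<alpha> u ws)"
proof -
  define q where "q = (SOME (u', ws'). u' \<in> \<theta> b \<and> factorisation n u' ws' \<and> concat ws' = concat ws)"
  have "fst q \<in> \<theta> b \<and> factorisation n (fst q) (snd q) \<and> concat (snd q) = concat ws"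
    using someI[of "\<lambda>(u', ws'). u' \<in> \<theta> b \<and> factorisation n u' ws' \<and> concat ws' = concat ws" "(u, ws)"]
      assms(2,3) unfolding q_def by (simp add: case_prod_beta)
  then have "q = (u, ws)"
    using assms unfolding unique_factorisation_def by (metis prod.collapse)
  moreover have "concat ws \<in> subst_pow \<theta> (Suc n) b"
    using assms(2,3) subst_pow_Suc_iff_factorisation by blast
  ultimately show ?thesis
    using assms(1) unfolding lift_perm_def q_def[symmetric] by simp
qed

lemma lift_perm_outside: "\<not> (unique_factorisation n b \<and> v \<in> subst_pow \<theta> (Suc n) b) \<Longrightarrow> lift_perm n \<alpha> b v = v"
  unfolding lift_perm_def by (rule if_not_P)

lemma factorisation_map2: "perm_family n \<alpha> \<Longrightarrow> factorisation n u ws \<Longrightarrow> factorisation n u (map2 \<alpha> u ws)"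
  by (auto intro!: factorisationI simp: factorisation_length factorisation_nth perm_family_in)

lemma lift_perm_comp:
  assumes \<alpha>: "perm_family n \<alpha>" and \<beta>: "perm_family n \<beta>"
  shows "lift_perm n (\<lambda>a. \<alpha> a \<circ> \<beta> a) b = lift_perm n \<alpha> b \<circ> lift_perm n \<beta> b"
proof
  fix v
  show "lift_perm n (\<lambda>a. \<alpha> a \<circ> \<beta> a) b v = (lift_perm n \<alpha> b \<circ> lift_perm n \<beta> b) v"
  proof (cases "unique_factorisation n b \<and> v \<in> subst_pow \<theta> (Suc n) b")
    case True
    then obtain u ws where f: "u \<in> \<theta> b" "factorisation n u ws" "concat ws = v"
      using subst_pow_Suc_iff_factorisation by blast
    have "map2 \<alpha> u (map2 \<beta> u ws) = map2 (\<lambda>a. \<alpha> a \<circ> \<beta> a) u ws"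
      using factorisation_length[OF f(2)] by (intro nth_equalityI) simp_all
    then show ?thesis
      using True f lift_perm_eq factorisation_map2[OF \<beta> f(2)] by auto
  qed (simp add: lift_perm_outside)
qed

lemma lift_perm_id: "lift_perm n (\<lambda>a. id) b = id"
proof
  fix v
  show "lift_perm n (\<lambda>a. id) b v = id v"
  proof (cases "unique_factorisation n b \<and> v \<in> subst_pow \<theta> (Suc n) b")
    case True
    then obtain u ws where f: "u \<in> \<theta> b" "factorisation n u ws" "concat ws = v"
      using subst_pow_Suc_iff_factorisation by blast
    have "map2 (\<lambda>a. id) u ws = ws"
      using factorisation_length[OF f(2)] by (intro nth_equalityI) simp_all
    then show ?thesis
      using True f lift_perm_eq by auto
  qed (simp add: lift_perm_outside)
qed

lemma lift_perm_in:
  assumes \<alpha>: "perm_family n \<alpha>" and v: "v \<in> subst_pow \<theta> (Suc n) b"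
  shows "lift_perm n \<alpha> b v \<in> subst_pow \<theta> (Suc n) b"
proof (cases "unique_factorisation n b")
  case True
  obtain u ws where f: "u \<in> \<theta> b" "factorisation n u ws" "concat ws = v"
    using v subst_pow_Suc_iff_factorisation by blast
  then show ?thesis
    using lift_perm_eq[OF True f(1,2)] factorisation_map2[OF \<alpha> f(2)] subst_pow_Suc_iff_factorisation by auto
next
  case False
  then have "lift_perm n \<alpha> b v = v"
    by (intro lift_perm_outside) simp
  with v show ?thesis
    by simp
qed

lemma perm_family_lift_perm:
  assumes \<alpha>: "perm_family n \<alpha>"
  shows "perm_family (Suc n) (lift_perm n \<alpha>)"
  unfolding perm_family_def
proof
  fix b
  define \<alpha>' where "\<alpha>' a = inv_into UNIV (\<alpha> a)" for a
  have \<alpha>': "perm_family n \<alpha>'"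
    unfolding \<alpha>'_def by (rule perm_family_inv[OF \<alpha>])
  have "(\<lambda>a. \<alpha> a \<circ> \<alpha>' a) = (\<lambda>a. id)" "(\<lambda>a. \<alpha>' a \<circ> \<alpha> a) = (\<lambda>a. id)"
    using \<alpha> permutes_inv_o unfolding perm_family_def \<alpha>'_def by blast+
  then have inverse: "lift_perm n \<alpha> b \<circ> lift_perm n \<alpha>' b = id" "lift_perm n \<alpha>' b \<circ> lift_perm n \<alpha> b = id"
    using lift_perm_comp[OF \<alpha> \<alpha>', of b] lift_perm_comp[OF \<alpha>' \<alpha>, of b] by (simp_all add: lift_perm_id)
  show "lift_perm n \<alpha> b permutes subst_pow \<theta> (Suc n) b"
  proof (rule bij_imp_permutes)
    show "bij_betw (lift_perm n \<alpha> b) (subst_pow \<theta> (Suc n) b) (subst_pow \<theta> (Suc n) b)"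
      by (rule bij_betw_byWitness[where f' = "lift_perm n \<alpha>' b"])
        (use inverse lift_perm_in[OF \<alpha>] lift_perm_in[OF \<alpha>'] in \<open>auto dest: fun_cong simp del: subst_pow.simps\<close>)
  qed (simp add: lift_perm_outside)
qed

definition single_perm :: "'a \<Rightarrow> ('a list \<Rightarrow> 'a list) \<Rightarrow> 'a \<Rightarrow> 'a list \<Rightarrow> 'a list" where
  "single_perm a p b = (if b = a then p else id)"

lemma perm_family_single_perm: "p permutes subst_pow \<theta> n a \<Longrightarrow> perm_family n (single_perm a p)"
  unfolding perm_family_def single_perm_def by (simp add: permutes_id)

lemma evenperm_lift_perm_single_perm:
  assumes "p permutes subst_pow \<theta> n a" "evenperm p"
  shows "evenperm (lift_perm n (single_perm a p) b)"
proof -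
  have "perm_hom (subst_pow \<theta> n a) (\<lambda>p. lift_perm n (single_perm a p) b)"
  proof
    fix p q
    assume p: "p permutes subst_pow \<theta> n a" and q: "q permutes subst_pow \<theta> n a"
    have "single_perm a (p \<circ> q) = (\<lambda>b. single_perm a p b \<circ> single_perm a q b)"
      unfolding single_perm_def by auto
    then show "lift_perm n (single_perm a (p \<circ> q)) b = lift_perm n (single_perm a p) b \<circ> lift_perm n (single_perm a q) b"
      using lift_perm_comp[OF perm_family_single_perm[OF p] perm_family_single_perm[OF q]] by simp
    show "permutation (lift_perm n (single_perm a p) b)"
      using perm_family_permutation[OF perm_family_lift_perm[OF perm_family_single_perm[OF p]]] .
  qed (rule finite_subst_pow)
  then show ?thesis
    using assms by (rule perm_hom.evenperm_hom)
qed

lemma evenperm_lift_perm: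
  assumes fin: "finite (UNIV :: 'a set)" and \<alpha>: "perm_family n \<alpha>" and even: "\<And>a. evenperm (\<alpha> a)"
  shows "evenperm (lift_perm n \<alpha> b)"
proof -
  define restr where "restr T b = (if b \<in> T then \<alpha> b else id)" for T b
  have restr: "perm_family n (restr T)" for T
    using \<alpha> unfolding perm_family_def restr_def by (simp add: permutes_id)
  have even_restr: "evenperm (lift_perm n (restr T) b)" if "finite T" for T
    using that
  proof (induction T rule: finite_induct)
    case empty
    have "restr {} = (\<lambda>a. id)"
      unfolding restr_def by auto
    then show ?case
      by (simp only: lift_perm_id) simp
  next
    case (insert a T)
    have p: "\<alpha> a permutes subst_pow \<theta> n a"
      using \<alpha> unfolding perm_family_def by blast
    have "restr (insert a T) = (\<lambda>b. single_perm a (\<alpha> a) b \<circ> restr T b)"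
      using insert(2) unfolding restr_def single_perm_def by auto
    then have "lift_perm n (restr (insert a T)) b = lift_perm n (single_perm a (\<alpha> a)) b \<circ> lift_perm n (restr T) b"
      using lift_perm_comp[OF perm_family_single_perm[OF p] restr] by simp
    moreover have "permutation (lift_perm n (single_perm a (\<alpha> a)) b)" "permutation (lift_perm n (restr T) b)"
      using perm_family_permutation perm_family_lift_perm perm_family_single_perm[OF p] restr by blast+
    ultimately have "evenperm (lift_perm n (restr (insert a T)) b) =
        (evenperm (lift_perm n (single_perm a (\<alpha> a)) b) = evenperm (lift_perm n (restr T) b))"
      by (simp only: evenperm_comp)
    then show ?case
      using evenperm_lift_perm_single_perm[OF p even] insert(3) by blast
  qed
  moreover have "restr UNIV = \<alpha>"
    unfolding restr_def by auto
  ultimately show ?thesis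
    using even_restr[OF fin] by simp
qed

end

section \<open>Unique decompositions\<close>

locale recognisable_subst = compatible_subst +
  assumes recognisable: "recognisable \<theta>"
begin

definition recognised_as :: "(int \<Rightarrow> 'a) \<Rightarrow> (int \<Rightarrow> 'a) \<Rightarrow> nat \<Rightarrow> bool" where
  "recognised_as x y k \<longleftrightarrow> y \<in> Xsub \<theta> \<and> k < slen \<theta> (y 0) \<and> in_image \<theta> y (shift_back k x)"

lemma ex1_recognised_as: "x \<in> Xsub \<theta> \<Longrightarrow> \<exists>!(y, k). recognised_as x y k"
  using recognisable unfolding recognisable_def recognised_as_def by simp

lemma decomp_imp_recognised_as:
  assumes p: "decomp 1 x c y" and y: "y \<in> Xsub \<theta>" and i0: "c i0 \<le> 0" "0 < c (i0 + 1)"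
  shows "recognised_as x (\<lambda>i. y (i + i0)) (nat (- c i0))"
  unfolding recognised_as_def
proof (intro conjI)
  show "(\<lambda>i. y (i + i0)) \<in> Xsub \<theta>"
    using y by (rule Xsub_shift)
  show "nat (- c i0) < slen \<theta> (y (0 + i0))"
    using i0 p unfolding decomp_def by auto
  have "decomp 1 x (\<lambda>i. (c (i + i0) - c i0) - int (nat (- c i0))) (\<lambda>i. y (i + i0))"
    using decomp_shift_index[OF p] i0 by simp
  then show "in_image \<theta> (\<lambda>i. y (i + i0)) (shift_back (nat (- c i0)) x)"
    unfolding in_image_iff_decomp decomp_shift_back by (intro exI[of _ "\<lambda>i. c (i + i0) - c i0"]) simp
qed

lemma unique_decomposition_1: "unique_decomposition 1"
  unfolding unique_decomposition_def
proof (intro ballI conjI allI impI)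
  fix x
  assume x: "x \<in> Xsub \<theta>"
  then obtain y k where "recognised_as x y k"
    using ex1_recognised_as by blast
  then show "\<exists>c y. decomp 1 x c y \<and> y \<in> Xsub \<theta>"
    unfolding recognised_as_def in_image_iff_decomp decomp_shift_back by blast
  fix c y c' y'
  assume p: "decomp 1 x c y" "y \<in> Xsub \<theta>" and p': "decomp 1 x c' y'" "y' \<in> Xsub \<theta>"
  obtain i0 where i0: "c i0 \<le> 0" "0 < c (i0 + 1)"
    using cut_sequence.ex_block[OF decomp_cut_sequence[OF p(1)]] by blast
  obtain i1 where i1: "c' i1 \<le> 0" "0 < c' (i1 + 1)"
    using cut_sequence.ex_block[OF decomp_cut_sequence[OF p'(1)]] by blast
  have "(\<lambda>i. y (i + i0)) = (\<lambda>i. y' (i + i1)) \<and> nat (- c i0) = nat (- c' i1)"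
    using ex1_recognised_as[OF x] decomp_imp_recognised_as[OF p i0] decomp_imp_recognised_as[OF p' i1]
    by auto
  then have y_eq: "y (i + i0) = y' (i + i1)" and c_eq: "c i0 = c' i1" for i
    using i0 i1 by (auto dest: fun_cong)
  have "decomp 1 x (\<lambda>i. c' (i + i1)) (\<lambda>i. y (i + i0))"
    using decomp_shift_index[OF p'(1), of i1] y_eq by simp
  then have c_shift: "(\<lambda>i. c (i + i0)) = (\<lambda>i. c' (i + i1))"
    using decomp_same_types[OF decomp_shift_index[OF p(1)]] c_eq by simp
  have "c' i = c (i + (i0 - i1)) \<and> y' i = y (i + (i0 - i1))" for i
    using fun_cong[OF c_shift, of "i - i1"] y_eq[of "i - i1"] by (simp add: algebra_simps)
  then show "\<exists>t. \<forall>i. c' i = c (i + t) \<and> y' i = y (i + t)"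
    by blast
qed

lemma ex_refinement:
  assumes p: "decomp (n + m) x c y"
  obtains d z e where "decomp m x d z" "decomp n z e y" "\<And>i. d (e i) = c i"
proof -
  obtain U WS where F: "\<And>i. U i \<in> subst_pow \<theta> n (y i)" "\<And>i. factorisation m (U i) (WS i)"
    "\<And>i. concat (WS i) = segment x (c i) (infl_len (n + m) (y i))"
    by (rule ex_factorisations[OF p]) blast+
  show ?thesis
    by (rule decomp_refine[OF p F]) (rule that)
qed

lemma unique_decomposition_Suc:
  assumes IH: "unique_decomposition n"
  shows "unique_decomposition (Suc n)"
  unfolding unique_decomposition_def
proof (intro ballI conjI allI impI)
  note U1 = unique_decompositionD[OF unique_decomposition_1]
  note Un = unique_decompositionD[OF IH]
  fix x
  assume x: "x \<in> Xsub \<theta>"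
  obtain d z where "decomp 1 x d z" "z \<in> Xsub \<theta>"
    using U1(1)[OF x] by blast
  moreover obtain e y where "decomp n z e y" "y \<in> Xsub \<theta>"
    using Un(1)[OF \<open>z \<in> Xsub \<theta>\<close>] by blast
  ultimately show "\<exists>c y. decomp (Suc n) x c y \<and> y \<in> Xsub \<theta>"
    using decomp_compose by fastforce
  fix c y c' y'
  assume p: "decomp (Suc n) x c y" and y: "y \<in> Xsub \<theta>"
    and p': "decomp (Suc n) x c' y'" and y': "y' \<in> Xsub \<theta>"
  have "decomp (n + 1) x c y" "decomp (n + 1) x c' y'"
    using p p' by simp_all
  obtain d z e where r: "decomp 1 x d z" "decomp n z e y" "\<And>i. d (e i) = c i"
    using \<open>decomp (n + 1) x c y\<close> by (rule ex_refinement) blast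
  obtain d' z' e' where r': "decomp 1 x d' z'" "decomp n z' e' y'" "\<And>i. d' (e' i) = c' i"
    using \<open>decomp (n + 1) x c' y'\<close> by (rule ex_refinement) blast
  have z: "z \<in> Xsub \<theta>" and z': "z' \<in> Xsub \<theta>"
    using decomp_Xsub r(2) r'(2) y y' by blast+
  obtain s where s: "\<And>i. d' i = d (i + s)" "\<And>i. z' i = z (i + s)"
    using U1(2)[OF x r(1) z r'(1) z'] by blast
  have "z' = (\<lambda>m. z (m + s))"
    using s(2) by (intro ext)
  then have "decomp n z (\<lambda>i. e' i + s) y'"
    using r'(2) by (simp add: decomp_shift)
  then obtain t where t: "\<And>i. e' i + s = e (i + t)" "\<And>i. y' i = y (i + t)"
    using Un(2)[OF z r(2) y _ y'] by blast
  have "c' i = c (i + t)" for i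
    using r(3)[of "i + t"] r'(3)[of i] s(1)[of "e' i"] t(1)[of i] by simp
  with t(2) show "\<exists>t. \<forall>i. c' i = c (i + t) \<and> y' i = y (i + t)"
    by blast
qed

lemma unique_decomposition: "unique_decomposition n"
  by (induction n) (simp_all add: unique_decomposition_0 unique_decomposition_Suc)

lemma ex_decomp:
  assumes "x \<in> Xsub \<theta>"
  obtains c y where "decomp n x c y" "y \<in> Xsub \<theta>"
  using unique_decompositionD(1)[OF unique_decomposition assms] by blast

lemma decomp_unique:
  assumes "x \<in> Xsub \<theta>" "decomp n x c y" "y \<in> Xsub \<theta>" "decomp n x c' y'" "y' \<in> Xsub \<theta>"
  obtains t where "\<And>i. c' i = c (i + t)" "\<And>i. y' i = y (i + t)"
  using unique_decompositionD(2)[OF unique_decomposition assms] by blast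

section \<open>Shuffle maps\<close>

definition replaces_blocks :: "nat \<Rightarrow> ('a \<Rightarrow> 'a list \<Rightarrow> 'a list) \<Rightarrow> (int \<Rightarrow> 'a) \<Rightarrow> (int \<Rightarrow> 'a) \<Rightarrow> bool" where
  "replaces_blocks n \<alpha> x x' \<longleftrightarrow> (\<exists>y k w p. y \<in> Xsub \<theta> \<and> k < infl_len n (y 0) \<and>
       (\<forall>i. w i \<in> subst_pow \<theta> n (y i)) \<and> p 0 = 0 \<and>
       (\<forall>i. p (i + 1) = p i + int (length (w i))) \<and>
       (\<forall>i j. j < length (w i) \<longrightarrow> x (p i + int j - int k) = w i ! j) \<and>
       (\<forall>i j. j < length (w i) \<longrightarrow> x' (p i + int j - int k) = \<alpha> (y i) (w i) ! j))"

lemma shuffle_map_eq_The: "x \<in> Xsub \<theta> \<Longrightarrow> shuffle_map \<theta> n \<alpha> x = (THE x'. replaces_blocks n \<alpha> x x')"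
  unfolding shuffle_map_def replaces_blocks_def by simp

lemma shuffle_map_outside: "x \<notin> Xsub \<theta> \<Longrightarrow> shuffle_map \<theta> n \<alpha> x = undefined"
  unfolding shuffle_map_def by simp

lemma replaces_blocksI:
  assumes p: "decomp n x c y" and y: "y \<in> Xsub \<theta>"
    and blocks: "\<And>i. segment x' (c i) (infl_len n (y i)) = \<alpha> (y i) (segment x (c i) (infl_len n (y i)))"
  shows "replaces_blocks n \<alpha> x x'"
proof -
  interpret cut_sequence c "\<lambda>i. infl_len n (y i)"
    using p by (rule decomp_cut_sequence)
  obtain i0 where i0: "c i0 \<le> 0" "0 < c (i0 + 1)"
    using ex_block by blast
  then have k: "int (nat (- c i0)) = - c i0"
    by simp
  show ?thesis
    unfolding replaces_blocks_def
  proof (intro exI[of _ "\<lambda>i. y (i + i0)"] exI[of _ "nat (- c i0)"] conjI allI impI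
      exI[of _ "\<lambda>i. segment x (c (i + i0)) (infl_len n (y (i + i0)))"] exI[of _ "\<lambda>i. c (i + i0) - c i0"])
    fix i j
    show "(\<lambda>i. y (i + i0)) \<in> Xsub \<theta>"
      using y by (rule Xsub_shift)
    show "nat (- c i0) < infl_len n (y (0 + i0))"
      using i0 cut_succ[of i0] by simp
    show "segment x (c (i + i0)) (infl_len n (y (i + i0))) \<in> subst_pow \<theta> n (y (i + i0))"
      by (rule decomp_block[OF p])
    show "c (i + 1 + i0) - c i0 = c (i + i0) - c i0 + int (length (segment x (c (i + i0)) (infl_len n (y (i + i0)))))"
      using cut_succ[of "i + i0"] by (simp add: algebra_simps)
    assume "j < length (segment x (c (i + i0)) (infl_len n (y (i + i0))))"
    then show "x (c (i + i0) - c i0 + int j - int (nat (- c i0))) = segment x (c (i + i0)) (infl_len n (y (i + i0))) ! j"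
      and "x' (c (i + i0) - c i0 + int j - int (nat (- c i0))) =
        \<alpha> (y (i + i0)) (segment x (c (i + i0)) (infl_len n (y (i + i0)))) ! j"
      using k by (simp_all add: blocks[of "i + i0", symmetric])
  qed simp
qed

lemma replaces_blocksE:
  assumes "replaces_blocks n \<alpha> x x'" and \<alpha>: "perm_family n \<alpha>"
  obtains c y where "decomp n x c y" "y \<in> Xsub \<theta>"
    "\<And>i. segment x' (c i) (infl_len n (y i)) = \<alpha> (y i) (segment x (c i) (infl_len n (y i)))"
proof -
  obtain y k w q where y: "y \<in> Xsub \<theta>" and w: "\<And>i. w i \<in> subst_pow \<theta> n (y i)"
    "\<And>i. q (i + 1) = q i + int (length (w i))"
    "\<And>i j. j < length (w i) \<Longrightarrow> shift_back k x (q i + int j) = w i ! j"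
    "\<And>i j. j < length (w i) \<Longrightarrow> shift_back k x' (q i + int j) = \<alpha> (y i) (w i) ! j"
    using assms(1) unfolding replaces_blocks_def shift_back_def by auto
  have "decomp n (shift_back k x) q y"
    unfolding decomp_iff_blocks using w(1-3) by blast
  then have "decomp n x (\<lambda>i. q i - int k) y"
    by (simp add: decomp_shift_back)
  moreover have "segment x (q i - int k) (infl_len n (y i)) = w i" for i
    using length_subst_pow[OF w(1)] w(3)
    by (intro nth_equalityI) (simp_all add: shift_back_def algebra_simps)
  moreover have "segment x' (q i - int k) (infl_len n (y i)) = \<alpha> (y i) (w i)" for i
    using w(4) perm_family_length[OF \<alpha> w(1)] length_subst_pow[OF w(1)]
    by (intro nth_equalityI) (simp_all add: shift_back_def algebra_simps)
  ultimately show ?thesis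
    using that y by simp
qed

lemma shuffle_map_eqI:
  assumes \<alpha>: "perm_family n \<alpha>" and x: "x \<in> Xsub \<theta>" and p: "decomp n x c y" and y: "y \<in> Xsub \<theta>"
    and blocks: "\<And>i. segment x' (c i) (infl_len n (y i)) = \<alpha> (y i) (segment x (c i) (infl_len n (y i)))"
  shows "shuffle_map \<theta> n \<alpha> x = x'"
  unfolding shuffle_map_eq_The[OF x]
proof (rule the_equality)
  show "replaces_blocks n \<alpha> x x'"
    using p y blocks by (rule replaces_blocksI)
  fix x''
  assume "replaces_blocks n \<alpha> x x''"
  then obtain c' y' where p': "decomp n x c' y'" and y': "y' \<in> Xsub \<theta>"
    and blocks': "\<And>i. segment x'' (c' i) (infl_len n (y' i)) = \<alpha> (y' i) (segment x (c' i) (infl_len n (y' i)))"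
    using \<alpha> by (rule replaces_blocksE) blast
  obtain t where t: "\<And>i. c' i = c (i + t)" "\<And>i. y' i = y (i + t)"
    using decomp_unique[OF x p y p' y'] by blast
  show "x'' = x'"
  proof (rule cut_sequence.ext_segments[OF decomp_cut_sequence[OF p]])
    fix i
    show "segment x'' (c i) (infl_len n (y i)) = segment x' (c i) (infl_len n (y i))"
      using blocks'[of "i - t"] t[of "i - t"] blocks[of i] by simp
  qed
qed

lemma shuffle_map_decomp:
  assumes \<alpha>: "perm_family n \<alpha>" and x: "x \<in> Xsub \<theta>" and p: "decomp n x c y" and y: "y \<in> Xsub \<theta>"
  shows "decomp n (shuffle_map \<theta> n \<alpha> x) c y"
    and "segment (shuffle_map \<theta> n \<alpha> x) (c i) (infl_len n (y i)) = \<alpha> (y i) (segment x (c i) (infl_len n (y i)))"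
proof -
  obtain x' where "decomp n x' c y"
    and blocks: "\<And>i. segment x' (c i) (infl_len n (y i)) = \<alpha> (y i) (segment x (c i) (infl_len n (y i)))"
    using ex_decomp_with_blocks[OF decomp_cut_sequence[OF p] perm_family_in[OF \<alpha> decomp_block[OF p]]]
    by blast
  moreover have "shuffle_map \<theta> n \<alpha> x = x'"
    using shuffle_map_eqI[OF assms blocks] .
  ultimately show "decomp n (shuffle_map \<theta> n \<alpha> x) c y"
    and "segment (shuffle_map \<theta> n \<alpha> x) (c i) (infl_len n (y i)) = \<alpha> (y i) (segment x (c i) (infl_len n (y i)))"
    by simp_all
qed

lemma shuffle_map_Xsub:
  assumes "perm_family n \<alpha>" "x \<in> Xsub \<theta>"
  shows "shuffle_map \<theta> n \<alpha> x \<in> Xsub \<theta>"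
proof -
  obtain c y where "decomp n x c y" "y \<in> Xsub \<theta>"
    using ex_decomp[OF assms(2)] .
  then show ?thesis
    using shuffle_map_decomp(1)[OF assms] decomp_Xsub by blast
qed

lemma shuffle_map_comp:
  assumes \<alpha>: "perm_family n \<alpha>" and \<beta>: "perm_family n \<beta>" and x: "x \<in> Xsub \<theta>"
  shows "shuffle_map \<theta> n \<beta> (shuffle_map \<theta> n \<alpha> x) = shuffle_map \<theta> n (\<lambda>a. \<beta> a \<circ> \<alpha> a) x"
proof -
  obtain c y where p: "decomp n x c y" and y: "y \<in> Xsub \<theta>"
    using ex_decomp[OF x] .
  show ?thesis
    by (rule shuffle_map_eqI[OF \<beta> shuffle_map_Xsub[OF \<alpha> x] shuffle_map_decomp(1)[OF \<alpha> x p y] y])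
      (simp add: shuffle_map_decomp(2)[OF \<alpha> x p y] shuffle_map_decomp(2)[OF perm_family_comp[OF \<alpha> \<beta>] x p y])
qed

lemma shuffle_map_id:
  assumes x: "x \<in> Xsub \<theta>"
  shows "shuffle_map \<theta> n (\<lambda>a. id) x = x"
proof -
  obtain c y where "decomp n x c y" "y \<in> Xsub \<theta>"
    using ex_decomp[OF x] .
  then show ?thesis
    using shuffle_map_eqI[OF perm_family_id x] by simp
qed

lemma factorisations_unique:
  assumes x: "x \<in> Xsub \<theta>" and p: "decomp (1 + n) x c y" and y: "y \<in> Xsub \<theta>"
    and U: "\<And>i. U i \<in> \<theta> (y i)" "\<And>i. factorisation n (U i) (WS i)"
      "\<And>i. concat (WS i) = segment x (c i) (infl_len (1 + n) (y i))"
    and U': "\<And>i. U' i \<in> \<theta> (y i)" "\<And>i. factorisation n (U' i) (WS' i)"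
      "\<And>i. concat (WS' i) = segment x (c i) (infl_len (1 + n) (y i))"
  shows "U' i = U i \<and> WS' i = WS i"
proof -
  obtain d z e where r: "decomp n x d z" "decomp 1 z e y" "\<And>i. d (e i) = c i"
    "\<And>i. segment z (e i) (infl_len 1 (y i)) = U i"
    "\<And>i j. j < infl_len 1 (y i) \<Longrightarrow> segment x (d (e i + int j)) (infl_len n (z (e i + int j))) = WS i ! j"
    by (rule decomp_refine[OF p _ U(2,3)]) (use U(1) in simp_all)
  obtain d' z' e' where r': "decomp n x d' z'" "decomp 1 z' e' y" "\<And>i. d' (e' i) = c i"
    "\<And>i. segment z' (e' i) (infl_len 1 (y i)) = U' i"
    "\<And>i j. j < infl_len 1 (y i) \<Longrightarrow> segment x (d' (e' i + int j)) (infl_len n (z' (e' i + int j))) = WS' i ! j"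
    by (rule decomp_refine[OF p _ U'(2,3)]) (use U'(1) in simp_all)
  obtain t where t: "\<And>k. d' k = d (k + t)" "\<And>k. z' k = z (k + t)"
    using decomp_unique[OF x r(1) decomp_Xsub[OF r(2) y] r'(1) decomp_Xsub[OF r'(2) y]] by blast
  have "d (e i) = d (e' i + t)"
    using r(3) r'(3) t(1) by metis
  then have e: "e i = e' i + t"
    using cut_sequence.cut_eq_iff[OF decomp_cut_sequence[OF r(1)]] by blast
  have "z' = (\<lambda>k. z (k + t))"
    using t(2) by (intro ext)
  then have "U' i = segment z (e' i + t) (infl_len 1 (y i))"
    using r'(4)[of i] by (simp add: segment_shift)
  then have "U' i = U i"
    using r(4)[of i] e by simp
  moreover have "WS' i = WS i"
  proof (rule nth_equalityI)
    have "length (WS i) = infl_len 1 (y i)" "length (WS' i) = infl_len 1 (y i)"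
      using factorisation_length U(1,2) U'(1,2) length_subst_pow[of _ 1] by (metis subst_pow_1(1))+
    then show "length (WS' i) = length (WS i)"
      by simp
    fix j
    assume "j < length (WS' i)"
    then have "j < infl_len 1 (y i)"
      using \<open>length (WS' i) = infl_len 1 (y i)\<close> by simp
    then show "WS' i ! j = WS i ! j"
      using r(5)[of j i] r'(5)[of j i] t e by (simp add: algebra_simps)
  qed
  ultimately show ?thesis
    by simp
qed

lemma unique_factorisation_types:
  assumes x: "x \<in> Xsub \<theta>" and p: "decomp (Suc n) x c y" and y: "y \<in> Xsub \<theta>"
  shows "unique_factorisation n (y i)"
  unfolding unique_factorisation_def
proof (intro allI impI)
  fix u ws u' ws'
  assume u: "u \<in> \<theta> (y i)" "factorisation n u ws" and u': "u' \<in> \<theta> (y i)" "factorisation n u' ws'"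
    and concat_eq: "concat ws = concat ws'"
  define V where "V k = (if k = i then concat ws else segment x (c k) (infl_len (Suc n) (y k)))" for k
  have "V k \<in> subst_pow \<theta> (Suc n) (y k)" for k
    using u decomp_block[OF p] subst_pow_Suc_iff_factorisation unfolding V_def by auto
  then obtain x' where p': "decomp (1 + n) x' c y"
    and V: "\<And>k. segment x' (c k) (infl_len (Suc n) (y k)) = V k"
    using ex_decomp_with_blocks[OF decomp_cut_sequence[OF p]] by auto
  have x': "x' \<in> Xsub \<theta>"
    using decomp_Xsub p' y by simp
  obtain U WS where U: "\<And>k. U k \<in> \<theta> (y k)" "\<And>k. factorisation n (U k) (WS k)"
    "\<And>k. concat (WS k) = segment x' (c k) (infl_len (1 + n) (y k))"
    by (rule ex_factorisations[OF p']) auto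
  have "u' = u \<and> ws' = ws"
    using factorisations_unique[OF x' p' y, of "U(i := u)" "WS(i := ws)" "U(i := u')" "WS(i := ws')" i]
      U u u' V[of i] concat_eq unfolding V_def by auto
  then show "u = u' \<and> ws = ws'"
    by simp
qed

lemma segment_shuffle_map_refined:
  assumes \<alpha>: "perm_family n \<alpha>" and x: "x \<in> Xsub \<theta>" and r1: "decomp n x d z" and z: "z \<in> Xsub \<theta>"
    and r2: "decomp 1 z e y"
    and U: "\<And>i. segment z (e i) (infl_len 1 (y i)) = U i" "\<And>i. factorisation n (U i) (WS i)"
    and WS: "\<And>i j. j < infl_len 1 (y i) \<Longrightarrow> segment x (d (e i + int j)) (infl_len n (z (e i + int j))) = WS i ! j"
  shows "segment (shuffle_map \<theta> n \<alpha> x) (d (e i)) (infl_len (1 + n) (y i)) = concat (map2 \<alpha> (U i) (WS i))"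
proof -
  interpret d: cut_sequence d "\<lambda>k. infl_len n (z k)"
    using r1 by (rule decomp_cut_sequence)
  define l where "l = (\<Sum>j<infl_len 1 (y i). infl_len n (z (e i + int j)))"
  have "d (e (i + 1)) = d (e i) + int (infl_len (1 + n) (y i))"
    using decomp_compose[OF r1 r2] unfolding decomp_def by blast
  moreover have "e (i + 1) = e i + int (infl_len 1 (y i))"
    using r2 unfolding decomp_def by blast
  ultimately have "infl_len (1 + n) (y i) = l"
    using d.cut_add[of "e i" "infl_len 1 (y i)"] unfolding l_def by (simp del: of_nat_sum)
  have len: "length (U i) = infl_len 1 (y i)" "length (WS i) = infl_len 1 (y i)"
    using arg_cong[OF U(1)[of i], of length] factorisation_length[OF U(2)] by simp_all
  have "segment (shuffle_map \<theta> n \<alpha> x) (d (e i)) l =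
      concat (map (\<lambda>j. \<alpha> (z (e i + int j)) (segment x (d (e i + int j)) (infl_len n (z (e i + int j)))))
        [0..<infl_len 1 (y i)])"
    unfolding l_def d.segment_cut_add by (simp add: shuffle_map_decomp(2)[OF \<alpha> x r1 z])
  also have "\<dots> = concat (map2 \<alpha> (U i) (WS i))"
    using WS len U(1)[of i, symmetric] by (intro arg_cong[where f = concat] nth_equalityI) simp_all
  finally show ?thesis
    using \<open>infl_len (1 + n) (y i) = l\<close> by simp
qed

lemma shuffle_map_lift_perm:
  assumes \<alpha>: "perm_family n \<alpha>"
  shows "shuffle_map \<theta> (Suc n) (lift_perm n \<alpha>) = shuffle_map \<theta> n \<alpha>"
proof
  fix x
  show "shuffle_map \<theta> (Suc n) (lift_perm n \<alpha>) x = shuffle_map \<theta> n \<alpha> x"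
  proof (cases "x \<in> Xsub \<theta>")
    case x: True
    obtain c y where p: "decomp (1 + n) x c y" and y: "y \<in> Xsub \<theta>"
      using ex_decomp[OF x] by blast
    obtain U WS where U: "\<And>i. U i \<in> \<theta> (y i)" "\<And>i. factorisation n (U i) (WS i)"
      "\<And>i. concat (WS i) = segment x (c i) (infl_len (1 + n) (y i))"
      by (rule ex_factorisations[OF p]) auto
    obtain d z e where r: "decomp n x d z" "decomp 1 z e y" "\<And>i. d (e i) = c i"
      "\<And>i. segment z (e i) (infl_len 1 (y i)) = U i"
      "\<And>i j. j < infl_len 1 (y i) \<Longrightarrow> segment x (d (e i + int j)) (infl_len n (z (e i + int j))) = WS i ! j"
      by (rule decomp_refine[OF p _ U(2,3)]) (use U(1) in simp_all)
    define x' where "x' = shuffle_map \<theta> n \<alpha> x"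
    have "segment x' (c i) (infl_len (Suc n) (y i)) = concat (map2 \<alpha> (U i) (WS i))" for i
      using segment_shuffle_map_refined[OF \<alpha> x r(1) decomp_Xsub[OF r(2) y] r(2,4) U(2) r(5)] r(3)
      unfolding x'_def by simp
    also have "\<dots> i = lift_perm n \<alpha> (y i) (segment x (c i) (infl_len (Suc n) (y i)))" for i
      using lift_perm_eq[OF unique_factorisation_types[OF x _ y] U(1,2)] p U(3) by simp
    finally show ?thesis
      using shuffle_map_eqI[OF perm_family_lift_perm[OF \<alpha>] x _ y] p unfolding x'_def by simp
  qed (simp add: shuffle_map_def)
qed

end

section \<open>The shuffle group and its even part\<close>

lemma (in group) subgroup_UN_mono:
  fixes H :: "nat \<Rightarrow> 'a set"
  assumes sub: "\<And>n. subgroup (H n) G" and mono: "mono H"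
  shows "subgroup (\<Union>n. H n) G"
proof (rule subgroupI)
  show "(\<Union>n. H n) \<subseteq> carrier G"
    using sub subgroup.subset by blast
  show "(\<Union>n. H n) \<noteq> {}"
    using subgroup.one_closed[OF sub] by blast
  show "inv a \<in> (\<Union>n. H n)" if "a \<in> (\<Union>n. H n)" for a
    using that subgroup.m_inv_closed[OF sub] by blast
  show "a \<otimes> b \<in> (\<Union>n. H n)" if ab: "a \<in> (\<Union>n. H n)" "b \<in> (\<Union>n. H n)" for a b
  proof -
    obtain m n where "a \<in> H m" "b \<in> H n"
      using ab by blast
    moreover have "H m \<subseteq> H (max m n)" "H n \<subseteq> H (max m n)"
      using monoD[OF mono, of m "max m n"] monoD[OF mono, of n "max m n"] by simp_all
    ultimately have "a \<in> H (max m n)" "b \<in> H (max m n)"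
      by blast+
    then show ?thesis
      using subgroup.m_closed[OF sub] by blast
  qed
qed

lemma finite_card_le_if_finite_subsets:
  assumes "\<And>F. F \<subseteq> A \<Longrightarrow> finite F \<Longrightarrow> card F \<le> k"
  shows "finite A \<and> card A \<le> k"
proof -
  have "finite A"
  proof (rule ccontr)
    assume "infinite A"
    then obtain F where "F \<subseteq> A" "finite F" "card F = Suc k"
      using infinite_arbitrarily_large by blast
    with assms[of F] show False
      by simp
  qed
  with assms[of A] show ?thesis
    by simp
qed

context recognisable_subst
begin

lemma shuffle_map_in_carrier:
  assumes \<alpha>: "perm_family n \<alpha>"
  shows "shuffle_map \<theta> n \<alpha> \<in> carrier (BijGroup (Xsub \<theta>))"
proof -
  define \<alpha>' where "\<alpha>' a = inv_into UNIV (\<alpha> a)" for a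
  have \<alpha>': "perm_family n \<alpha>'"
    unfolding \<alpha>'_def by (rule perm_family_inv[OF \<alpha>])
  have "(\<lambda>a. \<alpha> a \<circ> \<alpha>' a) = (\<lambda>a. id)" "(\<lambda>a. \<alpha>' a \<circ> \<alpha> a) = (\<lambda>a. id)"
    using \<alpha> permutes_inv_o unfolding perm_family_def \<alpha>'_def by blast+
  then have "bij_betw (shuffle_map \<theta> n \<alpha>) (Xsub \<theta>) (Xsub \<theta>)"
    using shuffle_map_comp[OF \<alpha> \<alpha>'] shuffle_map_comp[OF \<alpha>' \<alpha>] shuffle_map_id
      shuffle_map_Xsub[OF \<alpha>] shuffle_map_Xsub[OF \<alpha>']
    by (intro bij_betw_byWitness[where f' = "shuffle_map \<theta> n \<alpha>'"]) auto
  moreover have "shuffle_map \<theta> n \<alpha> \<in> extensional (Xsub \<theta>)"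
    using shuffle_map_outside by (simp add: extensional_def)
  ultimately show ?thesis
    unfolding BijGroup_def Bij_def by simp
qed

lemma shuffle_map_mult:
  assumes \<alpha>: "perm_family n \<alpha>" and \<beta>: "perm_family n \<beta>"
  shows "shuffle_map \<theta> n \<beta> \<otimes>\<^bsub>BijGroup (Xsub \<theta>)\<^esub> shuffle_map \<theta> n \<alpha> = shuffle_map \<theta> n (\<lambda>a. \<beta> a \<circ> \<alpha> a)"
proof -
  have "compose (Xsub \<theta>) (shuffle_map \<theta> n \<beta>) (shuffle_map \<theta> n \<alpha>) = shuffle_map \<theta> n (\<lambda>a. \<beta> a \<circ> \<alpha> a)"
    using shuffle_map_comp[OF \<alpha> \<beta>] shuffle_map_outside unfolding compose_def by auto
  then show ?thesis
    using shuffle_map_in_carrier[OF \<alpha>] shuffle_map_in_carrier[OF \<beta>] by (simp add: BijGroup_def)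
qed

lemma one_BijGroup_eq_shuffle_map: "\<one>\<^bsub>BijGroup (Xsub \<theta>)\<^esub> = shuffle_map \<theta> n (\<lambda>a. id)"
  using shuffle_map_id shuffle_map_outside unfolding BijGroup_def by auto

lemma inv_BijGroup_shuffle_map:
  assumes \<alpha>: "perm_family n \<alpha>"
  shows "inv\<^bsub>BijGroup (Xsub \<theta>)\<^esub> (shuffle_map \<theta> n \<alpha>) = shuffle_map \<theta> n (\<lambda>a. inv_into UNIV (\<alpha> a))"
proof (rule group.inv_equality[OF group_BijGroup])
  have "(\<lambda>a. inv_into UNIV (\<alpha> a) \<circ> \<alpha> a) = (\<lambda>a. id)"
    using \<alpha> permutes_inv_o unfolding perm_family_def by blast
  then show "shuffle_map \<theta> n (\<lambda>a. inv_into UNIV (\<alpha> a)) \<otimes>\<^bsub>BijGroup (Xsub \<theta>)\<^esub> shuffle_map \<theta> n \<alpha> =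
      \<one>\<^bsub>BijGroup (Xsub \<theta>)\<^esub>"
    using shuffle_map_mult[OF \<alpha> perm_family_inv[OF \<alpha>]] one_BijGroup_eq_shuffle_map by simp
qed (simp_all add: shuffle_map_in_carrier perm_family_inv \<alpha>)

lemma subgroup_shuffle_maps:
  assumes perm: "\<And>\<alpha>. P \<alpha> \<Longrightarrow> perm_family n \<alpha>" and id: "P (\<lambda>a. id)"
    and comp: "\<And>\<alpha> \<beta>. P \<alpha> \<Longrightarrow> P \<beta> \<Longrightarrow> P (\<lambda>a. \<beta> a \<circ> \<alpha> a)"
    and inv: "\<And>\<alpha>. P \<alpha> \<Longrightarrow> P (\<lambda>a. inv_into UNIV (\<alpha> a))"
  shows "subgroup {shuffle_map \<theta> n \<alpha> | \<alpha>. P \<alpha>} (BijGroup (Xsub \<theta>))"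
proof (rule group.subgroupI[OF group_BijGroup])
  show "{shuffle_map \<theta> n \<alpha> | \<alpha>. P \<alpha>} \<subseteq> carrier (BijGroup (Xsub \<theta>))"
    using shuffle_map_in_carrier perm by blast
  show "{shuffle_map \<theta> n \<alpha> | \<alpha>. P \<alpha>} \<noteq> {}"
    using id by blast
  show "inv\<^bsub>BijGroup (Xsub \<theta>)\<^esub> f \<in> {shuffle_map \<theta> n \<alpha> | \<alpha>. P \<alpha>}" if "f \<in> {shuffle_map \<theta> n \<alpha> | \<alpha>. P \<alpha>}" for f
    using that inv inv_BijGroup_shuffle_map perm by blast
  show "f \<otimes>\<^bsub>BijGroup (Xsub \<theta>)\<^esub> g \<in> {shuffle_map \<theta> n \<alpha> | \<alpha>. P \<alpha>}"
    if "f \<in> {shuffle_map \<theta> n \<alpha> | \<alpha>. P \<alpha>}" "g \<in> {shuffle_map \<theta> n \<alpha> | \<alpha>. P \<alpha>}" for f g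
    using that comp shuffle_map_mult perm by blast
qed

lemma Gamma_n_eq: "Gamma_n \<theta> n = {shuffle_map \<theta> n \<alpha> | \<alpha>. perm_family n \<alpha>}"
  unfolding Gamma_n_def perm_family_def ..

lemma A_n_eq: "A_n \<theta> n = {shuffle_map \<theta> n \<alpha> | \<alpha>. perm_family n \<alpha> \<and> (\<forall>a. evenperm (\<alpha> a))}"
  unfolding A_n_def perm_family_def all_conj_distrib ..

lemma subgroup_Gamma_n: "subgroup (Gamma_n \<theta> n) (BijGroup (Xsub \<theta>))"
  unfolding Gamma_n_eq by (rule subgroup_shuffle_maps) (simp_all add: perm_family_id perm_family_comp perm_family_inv)

lemma subgroup_A_n: "subgroup (A_n \<theta> n) (BijGroup (Xsub \<theta>))"
  unfolding A_n_eq
  by (rule subgroup_shuffle_maps)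
    (auto simp: perm_family_id perm_family_comp perm_family_inv evenperm_comp evenperm_inv perm_family_permutation)

lemma Gamma_n_subset_Suc: "Gamma_n \<theta> n \<subseteq> Gamma_n \<theta> (Suc n)"
proof
  fix f
  assume "f \<in> Gamma_n \<theta> n"
  then obtain \<alpha> where \<alpha>: "perm_family n \<alpha>" and "f = shuffle_map \<theta> n \<alpha>"
    unfolding Gamma_n_eq by blast
  then have "f = shuffle_map \<theta> (Suc n) (lift_perm n \<alpha>)"
    by (simp add: shuffle_map_lift_perm)
  with perm_family_lift_perm[OF \<alpha>] show "f \<in> Gamma_n \<theta> (Suc n)"
    unfolding Gamma_n_eq by blast
qed

lemma A_n_subset_Suc:
  assumes "finite (UNIV :: 'a set)"
  shows "A_n \<theta> n \<subseteq> A_n \<theta> (Suc n)"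
proof
  fix f
  assume "f \<in> A_n \<theta> n"
  then obtain \<alpha> where \<alpha>: "perm_family n \<alpha>" "\<And>a. evenperm (\<alpha> a)" and "f = shuffle_map \<theta> n \<alpha>"
    unfolding A_n_eq by blast
  then have "f = shuffle_map \<theta> (Suc n) (lift_perm n \<alpha>)"
    by (simp add: shuffle_map_lift_perm)
  with perm_family_lift_perm[OF \<alpha>(1)] evenperm_lift_perm[OF assms \<alpha>] show "f \<in> A_n \<theta> (Suc n)"
    unfolding A_n_eq by blast
qed

lemma subgroup_Gamma: "subgroup (Gamma \<theta>) (BijGroup (Xsub \<theta>))"
  unfolding Gamma_def
  by (rule group.subgroup_UN_mono[OF group_BijGroup subgroup_Gamma_n])
    (simp add: mono_iff_le_Suc Gamma_n_subset_Suc)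

lemma carrier_Gamma_group [simp]: "carrier (Gamma_group \<theta>) = Gamma \<theta>"
  by (simp add: Gamma_group_def)

lemma group_Gamma_group: "group (Gamma_group \<theta>)"
  unfolding Gamma_group_def by (rule subgroup.subgroup_is_group[OF subgroup_Gamma group_BijGroup])

lemma A_all_eq: "A_all \<theta> = (\<Union>n. A_n \<theta> (Suc n))"
proof -
  have "{1..} = range Suc"
    by (auto simp: image_iff Suc_le_D)
  then show ?thesis
    unfolding A_all_def by simp
qed

lemma A_all_subset_Gamma: "A_all \<theta> \<subseteq> Gamma \<theta>"
  unfolding A_all_eq Gamma_def A_n_eq Gamma_n_eq by blast

lemma subgroup_A_all:
  assumes "finite (UNIV :: 'a set)"
  shows "subgroup (A_all \<theta>) (BijGroup (Xsub \<theta>))"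
  unfolding A_all_eq
  by (rule group.subgroup_UN_mono[OF group_BijGroup subgroup_A_n])
    (simp add: mono_iff_le_Suc A_n_subset_Suc[OF assms])

lemma conj_A_n:
  assumes "g \<in> Gamma_n \<theta> n" "h \<in> A_n \<theta> n"
  shows "g \<otimes>\<^bsub>BijGroup (Xsub \<theta>)\<^esub> h \<otimes>\<^bsub>BijGroup (Xsub \<theta>)\<^esub> inv\<^bsub>BijGroup (Xsub \<theta>)\<^esub> g \<in> A_n \<theta> n"
proof -
  obtain \<alpha> \<beta> where \<alpha>: "perm_family n \<alpha>" "g = shuffle_map \<theta> n \<alpha>"
    and \<beta>: "perm_family n \<beta>" "\<And>a. evenperm (\<beta> a)" "h = shuffle_map \<theta> n \<beta>"
    using assms unfolding Gamma_n_eq A_n_eq by blast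
  define \<gamma> where "\<gamma> = (\<lambda>a. \<alpha> a \<circ> (\<beta> a \<circ> inv_into UNIV (\<alpha> a)))"
  have "perm_family n \<gamma>"
    unfolding \<gamma>_def by (intro perm_family_comp perm_family_inv \<alpha> \<beta>)
  moreover have "evenperm (\<gamma> a)" for a
    using perm_family_permutation[OF \<alpha>(1)] perm_family_permutation[OF \<beta>(1)] \<beta>(2)
    by (simp add: \<gamma>_def evenperm_comp evenperm_inv permutation_compose permutation_inverse)
  moreover have "g \<otimes>\<^bsub>BijGroup (Xsub \<theta>)\<^esub> h \<otimes>\<^bsub>BijGroup (Xsub \<theta>)\<^esub> inv\<^bsub>BijGroup (Xsub \<theta>)\<^esub> g = shuffle_map \<theta> n \<gamma>"
    using \<alpha> \<beta> perm_family_comp perm_family_inv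
    by (simp add: inv_BijGroup_shuffle_map shuffle_map_mult \<gamma>_def comp_assoc)
  ultimately show ?thesis
    unfolding A_n_eq by blast
qed

lemma normal_A_all:
  assumes fin: "finite (UNIV :: 'a set)"
  shows "A_all \<theta> \<lhd> Gamma_group \<theta>"
  unfolding group.normal_inv_iff[OF group_Gamma_group]
proof (intro conjI ballI)
  show "subgroup (A_all \<theta>) (Gamma_group \<theta>)"
    unfolding Gamma_group_def
    by (rule group.subgroup_incl[OF group_BijGroup subgroup_A_all[OF fin] subgroup_Gamma A_all_subset_Gamma])
  fix g h
  assume "g \<in> carrier (Gamma_group \<theta>)" "h \<in> A_all \<theta>"
  then obtain m n where "g \<in> Gamma_n \<theta> m" "h \<in> A_n \<theta> (Suc n)"
    unfolding Gamma_group_def Gamma_def A_all_eq by auto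
  moreover have "Gamma_n \<theta> m \<subseteq> Gamma_n \<theta> (max m (Suc n))" "A_n \<theta> (Suc n) \<subseteq> A_n \<theta> (max m (Suc n))"
    by (rule lift_Suc_mono_le[of "Gamma_n \<theta>", OF Gamma_n_subset_Suc], simp)
      (rule lift_Suc_mono_le[of "A_n \<theta>", OF A_n_subset_Suc[OF fin]], simp)
  ultimately have "g \<otimes>\<^bsub>BijGroup (Xsub \<theta>)\<^esub> h \<otimes>\<^bsub>BijGroup (Xsub \<theta>)\<^esub> inv\<^bsub>BijGroup (Xsub \<theta>)\<^esub> g
      \<in> A_n \<theta> (max m (Suc n))"
    using conj_A_n by blast
  then have "g \<otimes>\<^bsub>BijGroup (Xsub \<theta>)\<^esub> h \<otimes>\<^bsub>BijGroup (Xsub \<theta>)\<^esub> inv\<^bsub>BijGroup (Xsub \<theta>)\<^esub> g \<in> A_all \<theta>"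
    unfolding A_all_def by (intro UN_I[of "max m (Suc n)"]) auto
  moreover have "inv\<^bsub>Gamma_group \<theta>\<^esub> g = inv\<^bsub>BijGroup (Xsub \<theta>)\<^esub> g"
    using group.m_inv_consistent[OF group_BijGroup subgroup_Gamma] \<open>g \<in> carrier (Gamma_group \<theta>)\<close>
    unfolding Gamma_group_def by simp
  ultimately show "g \<otimes>\<^bsub>Gamma_group \<theta>\<^esub> h \<otimes>\<^bsub>Gamma_group \<theta>\<^esub> inv\<^bsub>Gamma_group \<theta>\<^esub> g \<in> A_all \<theta>"
    by (simp add: Gamma_group_def)
qed

(* Modulo A, the shuffle map of a family alpha only depends on the set S of letters a at which
   alpha a is odd; for such a, the choice below picks a fixed odd permutation. *)
definition parity_rep :: "nat \<Rightarrow> 'a set \<Rightarrow> 'a \<Rightarrow> 'a list \<Rightarrow> 'a list" where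
  "parity_rep N S a = (if a \<in> S then SOME p. p permutes subst_pow \<theta> N a \<and> \<not> evenperm p else id)"

lemma rcoset_eq_parity_rep:
  assumes fin: "finite (UNIV :: 'a set)" and N: "1 \<le> N" and g: "g \<in> Gamma_n \<theta> N"
  shows "\<exists>S. A_all \<theta> #>\<^bsub>Gamma_group \<theta>\<^esub> g = A_all \<theta> #>\<^bsub>Gamma_group \<theta>\<^esub> shuffle_map \<theta> N (parity_rep N S)"
proof -
  obtain \<alpha> where \<alpha>: "perm_family N \<alpha>" and g_eq: "g = shuffle_map \<theta> N \<alpha>"
    using g unfolding Gamma_n_eq by blast
  define r where "r = parity_rep N {a. \<not> evenperm (\<alpha> a)}"
  have r: "r a permutes subst_pow \<theta> N a \<and> evenperm (r a) = evenperm (\<alpha> a)" for a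
  proof (cases "evenperm (\<alpha> a)")
    case False
    then have "\<exists>p. p permutes subst_pow \<theta> N a \<and> \<not> evenperm p"
      using \<alpha> unfolding perm_family_def by blast
    with False show ?thesis
      unfolding r_def parity_rep_def by (simp add: someI_ex[OF \<open>\<exists>p. p permutes subst_pow \<theta> N a \<and> \<not> evenperm p\<close>])
  qed (simp add: r_def parity_rep_def permutes_id)
  then have r_perm: "perm_family N r"
    unfolding perm_family_def by blast
  define \<gamma> where "\<gamma> = (\<lambda>a. \<alpha> a \<circ> inv_into UNIV (r a))"
  have \<gamma>: "perm_family N \<gamma>"
    unfolding \<gamma>_def by (intro perm_family_comp perm_family_inv \<alpha> r_perm)
  have "evenperm (\<gamma> a)" for a
    using perm_family_permutation[OF \<alpha>] perm_family_permutation[OF r_perm] r[of a]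
    by (simp add: \<gamma>_def evenperm_comp evenperm_inv permutation_inverse)
  with \<gamma> N have A: "shuffle_map \<theta> N \<gamma> \<in> A_all \<theta>"
    unfolding A_all_def A_n_eq by auto
  have "inv_into UNIV (r a) \<circ> r a = id" for a
    using r permutes_inv_o(2) by blast
  then have "(\<lambda>a. \<gamma> a \<circ> r a) = \<alpha>"
    unfolding \<gamma>_def by (simp add: comp_assoc)
  then have "g = shuffle_map \<theta> N \<gamma> \<otimes>\<^bsub>Gamma_group \<theta>\<^esub> shuffle_map \<theta> N r"
    using shuffle_map_mult[OF r_perm \<gamma>] g_eq by (simp add: Gamma_group_def)
  moreover have "shuffle_map \<theta> N \<gamma> \<in> carrier (Gamma_group \<theta>)" "shuffle_map \<theta> N r \<in> carrier (Gamma_group \<theta>)"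
    using \<gamma> r_perm unfolding Gamma_group_def Gamma_def Gamma_n_eq by auto
  ultimately have "A_all \<theta> #>\<^bsub>Gamma_group \<theta>\<^esub> g =
      (A_all \<theta> #>\<^bsub>Gamma_group \<theta>\<^esub> shuffle_map \<theta> N \<gamma>) #>\<^bsub>Gamma_group \<theta>\<^esub> shuffle_map \<theta> N r"
    using group.coset_mult_assoc[OF group_Gamma_group] by (simp add: A_all_subset_Gamma)
  also have "A_all \<theta> #>\<^bsub>Gamma_group \<theta>\<^esub> shuffle_map \<theta> N \<gamma> = A_all \<theta>"
    using subgroup.rcos_const[OF normal_imp_subgroup[OF normal_A_all[OF fin]] group_Gamma_group A] .
  finally show ?thesis
    unfolding r_def by blast
qed

lemma rcosets_common_level:
  assumes F: "finite F" "F \<subseteq> rcosets\<^bsub>Gamma_group \<theta>\<^esub> (A_all \<theta>)"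
  obtains N where "1 \<le> N" "\<forall>C\<in>F. \<exists>g\<in>Gamma_n \<theta> N. C = A_all \<theta> #>\<^bsub>Gamma_group \<theta>\<^esub> g"
proof -
  have "\<forall>C\<in>F. eventually (\<lambda>n. \<exists>g\<in>Gamma_n \<theta> n. C = A_all \<theta> #>\<^bsub>Gamma_group \<theta>\<^esub> g) sequentially"
  proof
    fix C
    assume "C \<in> F"
    with F(2) have "C \<in> rcosets\<^bsub>Gamma_group \<theta>\<^esub> (A_all \<theta>)"
      by (rule subsetD)
    then obtain g where "g \<in> Gamma \<theta>" and C: "C = A_all \<theta> #>\<^bsub>Gamma_group \<theta>\<^esub> g"
      unfolding RCOSETS_def carrier_Gamma_group by blast
    then obtain m where "g \<in> Gamma_n \<theta> m"
      unfolding Gamma_def by blast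
    have "\<forall>n\<ge>m. g \<in> Gamma_n \<theta> n"
      using lift_Suc_mono_le[of "Gamma_n \<theta>", OF Gamma_n_subset_Suc] \<open>g \<in> Gamma_n \<theta> m\<close> by blast
    with C show "eventually (\<lambda>n. \<exists>g\<in>Gamma_n \<theta> n. C = A_all \<theta> #>\<^bsub>Gamma_group \<theta>\<^esub> g) sequentially"
      unfolding eventually_sequentially by blast
  qed
  then have "eventually (\<lambda>n. \<forall>C\<in>F. \<exists>g\<in>Gamma_n \<theta> n. C = A_all \<theta> #>\<^bsub>Gamma_group \<theta>\<^esub> g) sequentially"
    by (rule eventually_ball_finite[OF F(1)])
  then obtain N where "\<forall>n\<ge>N. \<forall>C\<in>F. \<exists>g\<in>Gamma_n \<theta> n. C = A_all \<theta> #>\<^bsub>Gamma_group \<theta>\<^esub> g"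
    unfolding eventually_sequentially by (rule exE)
  then show ?thesis
    using that[of "Suc N"] by simp
qed

lemma card_rcosets_A_all:
  assumes fin: "finite (UNIV :: 'a set)"
  shows "finite (rcosets\<^bsub>Gamma_group \<theta>\<^esub> (A_all \<theta>)) \<and>
    card (rcosets\<^bsub>Gamma_group \<theta>\<^esub> (A_all \<theta>)) \<le> 2 ^ card (UNIV :: 'a set)"
proof (rule finite_card_le_if_finite_subsets)
  fix F
  assume F: "F \<subseteq> rcosets\<^bsub>Gamma_group \<theta>\<^esub> (A_all \<theta>)" "finite F"
  obtain N where N: "1 \<le> N" "\<forall>C\<in>F. \<exists>g\<in>Gamma_n \<theta> N. C = A_all \<theta> #>\<^bsub>Gamma_group \<theta>\<^esub> g"
    using F(2,1) by (rule rcosets_common_level) blast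
  define rep_coset where "rep_coset S = A_all \<theta> #>\<^bsub>Gamma_group \<theta>\<^esub> shuffle_map \<theta> N (parity_rep N S)" for S
  have "F \<subseteq> rep_coset ` UNIV"
  proof
    fix C
    assume "C \<in> F"
    then obtain g where "g \<in> Gamma_n \<theta> N" "C = A_all \<theta> #>\<^bsub>Gamma_group \<theta>\<^esub> g"
      using N(2) by blast
    then obtain S where "C = rep_coset S"
      using rcoset_eq_parity_rep[OF fin N(1)] unfolding rep_coset_def by blast
    then show "C \<in> rep_coset ` UNIV"
      by blast
  qed
  moreover have fin_sets: "finite (UNIV :: 'a set set)"
    using fin by (simp flip: Pow_UNIV)
  ultimately have "card F \<le> card (rep_coset ` UNIV)"
    by (intro card_mono finite_imageI)
  also have "\<dots> \<le> card (UNIV :: 'a set set)"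
    using fin_sets by (rule card_image_le)
  also have "\<dots> = 2 ^ card (UNIV :: 'a set)"
    using card_Pow[of "UNIV :: 'a set"] fin by simp
  finally show "card F \<le> 2 ^ card (UNIV :: 'a set)" .
qed

end

theorem lemma3p11:
  fixes \<theta> :: "'a::finite \<Rightarrow> 'a list set"
  assumes "rand_subst \<theta>" and "compatible \<theta>" and "recognisable \<theta>"
  shows "(\<forall>n\<ge>1. A_n \<theta> n \<subseteq> A_n \<theta> (Suc n))
    \<and> A_all \<theta> \<lhd> Gamma_group \<theta>
    \<and> finite (rcosets\<^bsub>Gamma_group \<theta>\<^esub> (A_all \<theta>))
    \<and> card (rcosets\<^bsub>Gamma_group \<theta>\<^esub> (A_all \<theta>)) \<le> 2 ^ card (UNIV :: 'a set)"
proof -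
  interpret recognisable_subst \<theta>
    by unfold_locales (fact assms)+
  have fin: "finite (UNIV :: 'a set)"
    by simp
  show ?thesis
    using A_n_subset_Suc[OF fin] normal_A_all[OF fin] card_rcosets_A_all[OF fin] by blast
qed

end
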